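(* Let $f$ satisfy the standing assumptions (A) and let $a$ be defined as below. Assume there exists $\tilde\sigma>\sigma$ such that $a$ is nondecreasing on $[\sigma,\tilde\sigma]$. Then there exists a sequence $(f_n)_{n\in\mathbb{N}}$ of convex functions with $f_n(0)=0$ and $f_n(s)/s\to\infty$ as $s\to\infty$ such that: (i) $f_n\in C^1([0,+\infty))\cap C^3((0,+\infty))$; (ii) $f_n\to f$ uniformly on compact subsets of $[0,+\infty)$; (iii) $f_n'(0)=0$, $f_n'$ decreases in $n$ to $f'$ and $f_n'\to f'$ uniformly on compact subsets of $[0,+\infty)$; (iv) $f_n''>0$ on $(0,+\infty)$; (v) $\lim_{s\to0^+}\frac{sf_n''(s)-f_n'(s)}{s^3}=0$ and $\lim_{s\to0^+}\frac{f_n'(s)}{s}=0$ for each $n$; (vi) $\lim_{n\to\infty}\frac{sf_n''(s)-f_n'(s)}{s^3}=0$ and $\lim_{n\to\infty}\frac{f_n'(s)}{s}=0$ uniformly on compact subsets of $[0,\sigma)$; (vii) $a_n\to a$ uniformly on compact subsets of $(0,+\infty)$ and $b_n\to b$ uniformly on compact subsets of $(\sigma,+\infty)$; and (viii) if moreover $f\in C^2((0,+\infty))$, then $f_n''\to f''$ uniformly on compact subsets of $(0,+\infty)$.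
   Context: Standing assumptions (A) on $f:[0,+\infty)\to\mathbb{R}$: $f$ convex, nondecreasing, and there is $\sigma>0$ with $f\in C^1([0,+\infty))\cap C^3((\sigma,+\infty))$; $f(0)=0$ and $\lim_{s\to+\infty}f(s)/s=+\infty$; $f'(s)=0$ for $0\le s\le\sigma$; $f''(s)>0$ for $s>\sigma$. Define $a(s)=\frac{f'(s)}{sf''(s)}$ and $b(s)=\frac{s^2}{f''(s)}$ for $s>\sigma$, and $a(s)=b(s)=0$ for $0\le s\le\sigma$; and $a_n(s)=\frac{f_n'(s)}{sf_n''(s)}$, $b_n(s)=\frac{s^2}{f_n''(s)}$ for $s>0$. *)

theory Defs
  imports "HOL-Analysis.Analysis"
begin

text \<open>The functions a and b of the paper, built from sigma and the first and second
derivatives f1 = f', f2 = f'' of f: a(s) = f'(s)/(s f''(s)), b(s) = s^2/f''(s) for s > sigma,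
and 0 otherwise.\<close>

definition a_fun :: "real \<Rightarrow> (real \<Rightarrow> real) \<Rightarrow> (real \<Rightarrow> real) \<Rightarrow> real \<Rightarrow> real" where
  "a_fun \<sigma> f1 f2 s = (if s > \<sigma> then f1 s / (s * f2 s) else 0)"

definition b_fun :: "real \<Rightarrow> (real \<Rightarrow> real) \<Rightarrow> real \<Rightarrow> real" where
  "b_fun \<sigma> f2 s = (if s > \<sigma> then s^2 / f2 s else 0)"

end

theory Submission
  imports Defs "HOL-Real_Asymp.Real_Asymp"
begin

text \<open>
  The approximants are built at the level of the first derivative: for n a natural number
    Fn1 n s = theta_n(s) f'(s) + exp (-(n+1)/s)   for s > 0,  and 0 for s \<le> 0,
    Fn n x  = integral of Fn1 n over [0, x],
  where theta_n is a C2 cut-off which vanishes below \<sigma> + delta_n and equals 1 above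
  \<sigma> + 2 delta_n.  The cut-off removes the non-smooth point \<sigma> of f', and the flat kernel
  exp (-k/s) makes the second derivative strictly positive while vanishing to infinite order
  at 0.  The widths delta_n \<le> 1/(n+1) are chosen so small that f'(\<sigma> + 2 delta_n) lies below
  the decrease of the kernel from k = n+1 to k = n+2 on [\<sigma>, \<sigma>+2]; this makes Fn1 n
  decrease in n.
\<close>

lemma has_real_derivative_glue:
  fixes f g h :: "real \<Rightarrow> real"
  assumes f: "(f has_real_derivative D) (at x)" and g: "(g has_real_derivative D) (at x)"
    and e: "e > 0"
    and hf: "\<And>y. x - e < y \<Longrightarrow> y \<le> x \<Longrightarrow> h y = f y"
    and hg: "\<And>y. x \<le> y \<Longrightarrow> y < x + e \<Longrightarrow> h y = g y"
  shows "(h has_real_derivative D) (at x)"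
proof -
  have hx: "h x = f x" "h x = g x" using hf[of x] hg[of x] e by auto
  have fl: "((\<lambda>y. (f y - f x) / (y - x)) \<longlongrightarrow> D) (at_left x)"
    using f unfolding has_field_derivative_iff by (rule tendsto_mono[rotated]) (simp add: at_le)
  have gr: "((\<lambda>y. (g y - g x) / (y - x)) \<longlongrightarrow> D) (at_right x)"
    using g unfolding has_field_derivative_iff by (rule tendsto_mono[rotated]) (simp add: at_le)
  have left: "((\<lambda>y. (h y - h x) / (y - x)) \<longlongrightarrow> D) (at_left x)"
  proof (rule tendsto_cong[THEN iffD1, OF _ fl])
    have "eventually (\<lambda>y. y \<in> {x-e<..<x}) (at_left x)"
      using e by (intro eventually_at_left_real) auto
    then show "\<forall>\<^sub>F y in at_left x. (f y - f x) / (y - x) = (h y - h x) / (y - x)"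
      by eventually_elim (use hf hx in auto)
  qed
  have right: "((\<lambda>y. (h y - h x) / (y - x)) \<longlongrightarrow> D) (at_right x)"
  proof (rule tendsto_cong[THEN iffD1, OF _ gr])
    have "eventually (\<lambda>y. y \<in> {x<..<x+e}) (at_right x)"
      using e by (intro eventually_at_right_real) auto
    then show "\<forall>\<^sub>F y in at_right x. (g y - g x) / (y - x) = (h y - h x) / (y - x)"
      by eventually_elim (use hg hx in auto)
  qed
  show ?thesis unfolding has_field_derivative_iff
    using left right by (subst at_eq_sup_left_right) (rule filterlim_sup)
qed

lemma integral_has_real_derivative_at:
  fixes g :: "real \<Rightarrow> real"
  assumes "continuous_on UNIV g" "a < x"
  shows "((\<lambda>y. integral {a..y} g) has_real_derivative g x) (at x)"
proof -
  have "((\<lambda>y. integral {a..y} g) has_real_derivative g x) (at x within {a..x+1})"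
    by (rule integral_has_real_derivative) (use assms in \<open>auto intro: continuous_on_subset\<close>)
  moreover have "at x within {a..x+1} = at x" using assms by (intro at_within_interior) auto
  ultimately show ?thesis by simp
qed

lemma tendsto_div_Suc_power: "(\<lambda>n. C / (real n + 1)^Suc p) \<longlonglongrightarrow> 0"
proof -
  have "(\<lambda>n. 1 / (real n + 1)) \<longlonglongrightarrow> 0" by real_asymp
  then have "(\<lambda>n. C * (1 / (real n + 1))^Suc p) \<longlonglongrightarrow> C * 0^Suc p"
    by (intro tendsto_intros)
  then show ?thesis by (simp add: power_divide)
qed

lemma eventually_div_Suc_power_less:
  "c > 0 \<Longrightarrow> eventually (\<lambda>n. C / (real n + 1)^Suc p < c) sequentially"
  using tendsto_div_Suc_power[of C p] by (rule order_tendstoD(2))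

lemma uniform_limit_by_bound:
  fixes G :: "nat \<Rightarrow> real \<Rightarrow> real"
  assumes "eventually (\<lambda>n. \<forall>x\<in>K. \<bar>G n x - g x\<bar> \<le> b n) sequentially" "b \<longlonglongrightarrow> 0"
  shows "uniform_limit K G g sequentially"
proof (rule uniform_limitI)
  fix e :: real assume "e > 0"
  with assms(2) have "eventually (\<lambda>n. b n < e) sequentially" by (rule order_tendstoD(2))
  with assms(1) show "eventually (\<lambda>n. \<forall>x\<in>K. dist (G n x) (g x) < e) sequentially"
    by eventually_elim (force simp: dist_real_def)
qed

lemma compact_upper_bound:
  fixes K :: "real set"
  assumes "compact K"
  obtains R where "R \<ge> 0" "\<And>x. x \<in> K \<Longrightarrow> x \<le> R"
proof -
  obtain a where "\<forall>x\<in>K. \<bar>x\<bar> \<le> a" using compact_imp_bounded[OF assms] bounded_real by blast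
  then show ?thesis using that[of "max a 0"] by fastforce
qed

lemma compact_lower_bound:
  fixes K :: "real set"
  assumes "compact K" "K \<subseteq> {a<..}"
  obtains c where "c > a" "\<And>x. x \<in> K \<Longrightarrow> c \<le> x"
proof (cases "K = {}")
  case True then show ?thesis using that[of "a+1"] by auto
next
  case False
  then obtain s where "s \<in> K" "\<forall>t\<in>K. s \<le> t" using compact_attains_inf[OF assms(1)] by blast
  then show ?thesis using that[of s] assms(2) by auto
qed

lemma compact_positive_minimum:
  fixes K :: "real set" and g :: "real \<Rightarrow> real"
  assumes "compact K" "continuous_on K g" "\<And>x. x \<in> K \<Longrightarrow> g x > 0"
  obtains m where "m > 0" "\<And>x. x \<in> K \<Longrightarrow> m \<le> g x"
proof (cases "K = {}")
  case True then show ?thesis using that[of 1] by auto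
next
  case False
  then obtain s where "s \<in> K" "\<forall>t\<in>K. g s \<le> g t"
    using continuous_attains_inf[OF assms(1) False assms(2)] by blast
  then show ?thesis using that[of "g s"] assms(3) by auto
qed

text \<open>Perturbing numerator and denominator of p/(x q) by small nonnegative amounts h, h'
  changes the quotient by little, provided q and x are bounded below.  This controls
  the convergence of a_n to a.\<close>

lemma quotient_perturbation_bound:
  fixes p q h h' x c m A B B' :: real
  assumes "p \<ge> 0" "q \<ge> m" "m > 0" "x \<ge> c" "c > 0" "0 \<le> h" "h \<le> B" "0 \<le> h'" "h' \<le> B'" "p \<le> A"
  shows "\<bar>(p + h) / (x * (q + h')) - p / (x * q)\<bar> \<le> B / (c * m) + A * B' / (c * m^2)"
proof -
  have pos: "q > 0" "x > 0" "q + h' > 0" using assms by auto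
  have eq: "(p + h) / (x * (q + h')) - p / (x * q) = h / (x * (q + h')) - p * h' / (x * q * (q + h'))"
  proof -
    have a: "p / (x * q) = p * (q + h') / (x * q * (q + h'))" using pos by simp
    have b: "(p + h) / (x * (q + h')) = (p + h) * q / (x * q * (q + h'))" using pos by simp
    have c: "h / (x * (q + h')) = h * q / (x * q * (q + h'))" using pos by simp
    have "(p + h) * q - p * (q + h') = h * q - p * h'" by (simp add: algebra_simps)
    then show ?thesis unfolding a b c by (metis diff_divide_distrib)
  qed
  have t1: "h / (x * (q + h')) \<le> B / (c * m)"
  proof -
    have "c * m \<le> x * (q + h')" using assms by (intro mult_mono) auto
    then have "h / (x * (q + h')) \<le> h / (c * m)" using assms by (intro divide_left_mono) auto
    also have "\<dots> \<le> B / (c * m)" using assms by (intro divide_right_mono) auto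
    finally show ?thesis .
  qed
  have t2: "p * h' / (x * q * (q + h')) \<le> A * B' / (c * m^2)"
  proof -
    have "c * m \<le> x * q" using assms by (intro mult_mono) auto
    then have "(c * m) * m \<le> (x * q) * (q + h')" using assms by (intro mult_mono) auto
    then have "c * m^2 \<le> x * q * (q + h')" by (simp add: power2_eq_square mult.assoc)
    then have "p * h' / (x * q * (q + h')) \<le> p * h' / (c * m^2)" using assms
      by (intro divide_left_mono) auto
    also have "\<dots> \<le> A * B' / (c * m^2)" using assms by (intro divide_right_mono mult_mono) auto
    finally show ?thesis .
  qed
  have "h / (x * (q + h')) \<ge> 0" "p * h' / (x * q * (q + h')) \<ge> 0" using assms pos by auto
  then show ?thesis unfolding eq using t1 t2 by linarith
qed

text \<open>The analogous estimate for x^2/q, which controls the convergence of b_n to b.\<close>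

lemma square_quotient_perturbation_bound:
  fixes q h' x m R B' :: real
  assumes "q \<ge> m" "m > 0" "0 \<le> x" "x \<le> R" "0 \<le> h'" "h' \<le> B'"
  shows "\<bar>x^2 / (q + h') - x^2 / q\<bar> \<le> R^2 * B' / m^2"
proof -
  have pos: "q > 0" "q + h' > 0" using assms by auto
  have eq: "x^2 / (q + h') - x^2 / q = - (x^2 * h' / (q * (q + h')))"
    using pos by (simp add: field_simps)
  have "m^2 \<le> q * (q + h')" unfolding power2_eq_square using assms by (intro mult_mono) auto
  then have "x^2 * h' / (q * (q + h')) \<le> x^2 * h' / m^2" using assms
    by (intro divide_left_mono) auto
  also have "\<dots> \<le> R^2 * B' / m^2" using assms by (intro divide_right_mono mult_mono power_mono) auto
  finally show ?thesis unfolding eq using assms pos by simp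
qed

section \<open>The smooth step\<close>

text \<open>The quintic 6y^5 - 15y^4 + 10y^3 rises from 0 to 1 on [0, 1] with first and second
  derivative vanishing at both ends; composed with the clamp to [0, 1] it gives a C2 step
  function on the real line whose second derivative is continuous.\<close>

definition clamp01 :: "real \<Rightarrow> real" where "clamp01 x = max 0 (min 1 x)"

lemma clamp01_compose_deriv:
  fixes q q' :: "real \<Rightarrow> real"
  assumes q: "\<And>y. (q has_real_derivative q' y) (at y)" and q0: "q' 0 = 0" and q1: "q' 1 = 0"
  shows "((\<lambda>x. q (clamp01 x)) has_real_derivative q' (clamp01 x)) (at x)"
proof -
  consider "x < 0" | "x = 0" | "0 < x \<and> x < 1" | "x = 1" | "x > 1" by linarith
  then show ?thesis
  proof cases
    case 1
    have "((\<lambda>_. q 0) has_real_derivative 0) (at x)" by simp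
    then have "((\<lambda>x. q (clamp01 x)) has_real_derivative 0) (at x)"
      by (rule has_field_derivative_transform_within_open[where S="{..<0}"])
         (use 1 in \<open>auto simp: clamp01_def\<close>)
    then show ?thesis using 1 q0 q1 by (simp add: clamp01_def)
  next
    case 2
    have "((\<lambda>x. q (clamp01 x)) has_real_derivative 0) (at x)"
      by (rule has_real_derivative_glue[where f="\<lambda>_. q 0" and g=q and e=1]) (use 2 q[of 0] q q0 in \<open>auto simp: clamp01_def\<close>)
    then show ?thesis using 2 q0 by (simp add: clamp01_def)
  next
    case 3
    show ?thesis
      by (rule has_field_derivative_transform_within_open[where S="{0<..<1}" and f=q])
         (use 3 q in \<open>auto simp: clamp01_def\<close>)
  next
    case 4
    have "((\<lambda>x. q (clamp01 x)) has_real_derivative 0) (at x)"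
      by (rule has_real_derivative_glue[where g="\<lambda>_. q 1" and f=q and e=1]) (use 4 q[of 1] q q1 in \<open>auto simp: clamp01_def\<close>)
    then show ?thesis using 4 q1 by (simp add: clamp01_def)
  next
    case 5
    have "((\<lambda>_. q 1) has_real_derivative 0) (at x)" by simp
    then have "((\<lambda>x. q (clamp01 x)) has_real_derivative 0) (at x)"
      by (rule has_field_derivative_transform_within_open[where S="{1<..}"])
         (use 5 in \<open>auto simp: clamp01_def\<close>)
    then show ?thesis using 5 q0 q1 by (simp add: clamp01_def)
  qed
qed

definition step_poly :: "real \<Rightarrow> real" where "step_poly y = 6*y^5 - 15*y^4 + 10*y^3"
definition step_poly1 :: "real \<Rightarrow> real" where "step_poly1 y = 30*y^4 - 60*y^3 + 30*y^2"
definition step_poly2 :: "real \<Rightarrow> real" where "step_poly2 y = 120*y^3 - 180*y^2 + 60*y"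

definition smooth_step :: "real \<Rightarrow> real" where "smooth_step x = step_poly (clamp01 x)"
definition smooth_step1 :: "real \<Rightarrow> real" where "smooth_step1 x = step_poly1 (clamp01 x)"
definition smooth_step2 :: "real \<Rightarrow> real" where "smooth_step2 x = step_poly2 (clamp01 x)"

lemma smooth_step_deriv: "(smooth_step has_real_derivative smooth_step1 x) (at x)"
proof -
  have "(step_poly has_real_derivative step_poly1 y) (at y)" for y
    unfolding step_poly_def step_poly1_def by (rule derivative_eq_intros refl)+ (simp add: eval_nat_numeral algebra_simps)
  then show ?thesis unfolding smooth_step_def smooth_step1_def
    by (intro clamp01_compose_deriv) (auto simp: step_poly1_def)
qed

lemma smooth_step1_deriv: "(smooth_step1 has_real_derivative smooth_step2 x) (at x)"
proof -
  have "(step_poly1 has_real_derivative step_poly2 y) (at y)" for y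
    unfolding step_poly1_def step_poly2_def by (rule derivative_eq_intros refl)+ (simp add: eval_nat_numeral algebra_simps)
  then show ?thesis unfolding smooth_step1_def smooth_step2_def
    by (intro clamp01_compose_deriv) (auto simp: step_poly2_def)
qed

lemma smooth_step2_continuous: "continuous_on UNIV smooth_step2"
  unfolding smooth_step2_def step_poly2_def clamp01_def by (intro continuous_intros)

lemma clamp01_range: "0 \<le> clamp01 x" "clamp01 x \<le> 1" by (auto simp: clamp01_def)

lemma smooth_step_below: "x \<le> 0 \<Longrightarrow> smooth_step x = 0" "x \<le> 0 \<Longrightarrow> smooth_step1 x = 0" "x \<le> 0 \<Longrightarrow> smooth_step2 x = 0"
  by (auto simp: smooth_step_def smooth_step1_def smooth_step2_def clamp01_def step_poly_def step_poly1_def step_poly2_def)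

lemma smooth_step_above: "x \<ge> 1 \<Longrightarrow> smooth_step x = 1" "x \<ge> 1 \<Longrightarrow> smooth_step1 x = 0"
  by (auto simp: smooth_step_def smooth_step1_def clamp01_def step_poly_def step_poly1_def)

lemma smooth_step1_nonneg: "smooth_step1 x \<ge> 0"
proof -
  have "step_poly1 y = 30*y^2*(y-1)^2" for y by (simp add: step_poly1_def power2_eq_square power3_eq_cube power4_eq_xxxx algebra_simps)
  then show ?thesis unfolding smooth_step1_def by simp
qed

text \<open>The slope of the step is at most 2 (its maximum is 15/8, attained at 1/2).\<close>

lemma smooth_step1_le: "smooth_step1 x \<le> 2"
proof -
  have eq: "step_poly1 y = 30*(y*(1-y))^2" for y by (simp add: step_poly1_def power2_eq_square power3_eq_cube power4_eq_xxxx algebra_simps)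
  have "step_poly1 y \<le> 2" if "0 \<le> y" "y \<le> 1" for y
  proof -
    have "1/4 - y*(1-y) = (y - 1/2)^2" by (simp add: power2_eq_square algebra_simps)
    then have a: "y*(1-y) \<le> 1/4" using zero_le_power2[of "y - 1/2"] by linarith
    have b: "0 \<le> y*(1-y)" using that by simp
    have "(y*(1-y))^2 \<le> (1/4)^2" by (rule power_mono[OF a b])
    then have "(y*(1-y))^2 \<le> 1/16" by (simp add: power2_eq_square)
    then show ?thesis unfolding eq by linarith
  qed
  then show ?thesis unfolding smooth_step1_def using clamp01_range by blast
qed

lemma smooth_step_mono: "x \<le> y \<Longrightarrow> smooth_step x \<le> smooth_step y"
  using DERIV_nonneg_imp_nondecreasing[of x y smooth_step] smooth_step_deriv smooth_step1_nonneg by blast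

lemma smooth_step_range: "0 \<le> smooth_step x" "smooth_step x \<le> 1"
proof -
  have "smooth_step (min 0 x) \<le> smooth_step x" by (rule smooth_step_mono) simp
  then show "0 \<le> smooth_step x" using smooth_step_below(1)[of "min 0 x"] by simp
  have "smooth_step x \<le> smooth_step (max 1 x)" by (rule smooth_step_mono) simp
  then show "smooth_step x \<le> 1" using smooth_step_above(1)[of "max 1 x"] by simp
qed

section \<open>The flat exponential kernel\<close>

text \<open>For k > 0 it is positive and strictly increasing on (0, \<infinity>), and it is flat at 0: it and
  its derivative are bounded by powers of s/k, which yields all smallness statements near
  0 and for large n (with k = n+1).\<close>

definition kernel :: "real \<Rightarrow> real \<Rightarrow> real" where
  "kernel k s = (if s > 0 then exp (-k/s) else 0)"
definition kernel1 :: "real \<Rightarrow> real \<Rightarrow> real" where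
  "kernel1 k s = (if s > 0 then k/s^2 * exp (-k/s) else 0)"
definition kernel2 :: "real \<Rightarrow> real \<Rightarrow> real" where
  "kernel2 k s = (if s > 0 then (k^2/s^4 - 2*k/s^3) * exp (-k/s) else 0)"

lemma kernel_deriv: "x > 0 \<Longrightarrow> (kernel k has_real_derivative kernel1 k x) (at x)"
proof -
  assume x: "x > 0"
  have "((\<lambda>s. exp (-k/s)) has_real_derivative k/x^2 * exp (-k/x)) (at x)"
    using x by (auto intro!: derivative_eq_intros simp: power2_eq_square field_simps)
  then have "(kernel k has_real_derivative k/x^2 * exp (-k/x)) (at x)"
    by (rule has_field_derivative_transform_within_open[where S="{0<..}"])
       (use x in \<open>auto simp: kernel_def\<close>)
  then show ?thesis using x by (simp add: kernel1_def)
qed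

lemma kernel1_deriv: "x > 0 \<Longrightarrow> (kernel1 k has_real_derivative kernel2 k x) (at x)"
proof -
  assume x: "x > 0"
  have "((\<lambda>s. k/s^2 * exp (-k/s)) has_real_derivative (k^2/x^4 - 2*k/x^3) * exp (-k/x)) (at x)"
    using x by (auto intro!: derivative_eq_intros simp: power2_eq_square power3_eq_cube power4_eq_xxxx field_simps)
  then have "(kernel1 k has_real_derivative (k^2/x^4 - 2*k/x^3) * exp (-k/x)) (at x)"
    by (rule has_field_derivative_transform_within_open[where S="{0<..}"])
       (use x in \<open>auto simp: kernel1_def\<close>)
  then show ?thesis using x by (simp add: kernel2_def)
qed

lemma kernel2_continuous: "continuous_on {0<..} (kernel2 k)"
proof -
  have "continuous_on {0<..} (\<lambda>s. (k^2/s^4 - 2*k/s^3) * exp (-k/s))"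
    by (intro continuous_intros) auto
  then show ?thesis by (rule continuous_on_cong[THEN iffD1, rotated 2]) (auto simp: kernel2_def)
qed

lemma exp_neg_le_power: "(x::real) > 0 \<Longrightarrow> exp (-x) \<le> 3125 / x^5"
proof -
  assume x: "x > 0"
  have "x/5 \<le> exp (x/5)" using exp_ge_add_one_self[of "x/5"] by linarith
  then have "(x/5)^5 \<le> exp (x/5)^5" using x by (intro power_mono) auto
  also have "exp (x/5)^5 = exp x" using exp_of_nat_mult[of 5 "x/5"] by simp
  finally have "x^5 \<le> 3125 * exp x" by (simp add: power_divide)
  then show ?thesis using x by (simp add: exp_minus field_simps)
qed

lemma kernel_nonneg: "kernel k s \<ge> 0" by (simp add: kernel_def)
lemma kernel1_pos: "k > 0 \<Longrightarrow> s > 0 \<Longrightarrow> kernel1 k s > 0" by (simp add: kernel1_def)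
lemma kernel1_nonneg: "k \<ge> 0 \<Longrightarrow> kernel1 k s \<ge> 0" by (simp add: kernel1_def)
lemma kernel_nonpos: "s \<le> 0 \<Longrightarrow> kernel k s = 0" "s \<le> 0 \<Longrightarrow> kernel1 k s = 0"
  by (auto simp: kernel_def kernel1_def)

lemma kernel_bound: assumes "k > 0" "s > 0" shows "kernel k s \<le> 3125 * s^5 / k^5"
proof -
  have "exp (-(k/s)) \<le> 3125 / (k/s)^5" using assms by (intro exp_neg_le_power) auto
  then show ?thesis using assms by (simp add: kernel_def power_divide field_simps)
qed

lemma kernel1_bound: assumes "k > 0" "s > 0" shows "kernel1 k s \<le> 3125 * s^3 / k^4"
proof -
  have "exp (-(k/s)) \<le> 3125 / (k/s)^5" using assms by (intro exp_neg_le_power) auto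
  then have "k/s^2 * exp (-(k/s)) \<le> k/s^2 * (3125 / (k/s)^5)"
    using assms by (intro mult_left_mono) auto
  also have "\<dots> = 3125 * s^3 / k^4" using assms
    by (simp add: power_divide field_simps eval_nat_numeral)
  finally show ?thesis using assms by (simp add: kernel1_def)
qed

lemma kernel_bounds_upto:
  assumes "k > 0" "0 \<le> R" "x \<le> R"
  shows "kernel k x \<le> 3125 * R^5 / k^5" "kernel1 k x \<le> 3125 * R^3 / k^4"
proof -
  have "kernel k x \<le> 3125 * R^5 / k^5 \<and> kernel1 k x \<le> 3125 * R^3 / k^4"
  proof (cases "x > 0")
    case True
    have "3125 * x^5 / k^5 \<le> 3125 * R^5 / k^5" "3125 * x^3 / k^4 \<le> 3125 * R^3 / k^4"
      using assms True by (intro divide_right_mono mult_left_mono power_mono; simp)+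
    then show ?thesis using kernel_bound[OF assms(1) True] kernel1_bound[OF assms(1) True] by linarith
  qed (use kernel_nonpos assms in simp)
  then show "kernel k x \<le> 3125 * R^5 / k^5" "kernel1 k x \<le> 3125 * R^3 / k^4" by auto
qed

lemma kernel_div_bound: assumes "k > 0" "s > 0" shows "kernel k s / s \<le> 3125 * s^4 / k^5"
proof -
  have "kernel k s / s \<le> (3125 * s^5 / k^5) / s"
    using kernel_bound[OF assms] assms by (intro divide_right_mono) auto
  also have "\<dots> = 3125 * s^4 / k^5" using assms by (simp add: eval_nat_numeral field_simps)
  finally show ?thesis .
qed

lemma kernel_cubic_bound: assumes "k > 0" "s > 0"
  shows "\<bar>(s * kernel1 k s - kernel k s) / s^3\<bar> \<le> 3125 * (s / k^4 + s^2 / k^5)"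
proof -
  have "\<bar>s * kernel1 k s - kernel k s\<bar> \<le> s * kernel1 k s + kernel k s"
    using mult_nonneg_nonneg[OF _ kernel1_nonneg[of k s]] kernel_nonneg[of k s] assms by (auto simp: abs_if)
  also have "\<dots> \<le> s * (3125 * s^3 / k^4) + 3125 * s^5 / k^5"
    using kernel1_bound[OF assms] kernel_bound[OF assms] assms by (intro add_mono mult_left_mono) auto
  finally have "\<bar>s * kernel1 k s - kernel k s\<bar> / s^3 \<le> (s * (3125 * s^3 / k^4) + 3125 * s^5 / k^5) / s^3"
    using assms by (intro divide_right_mono) auto
  also have "\<dots> = 3125 * (s / k^4 + s^2 / k^5)" using assms
    by (simp add: eval_nat_numeral field_simps)
  finally show ?thesis using assms by (simp add: abs_divide)
qed

lemma kernel_eq_kernel1: assumes "k > 0" "s > 0" shows "kernel k s = s^2 / k * kernel1 k s"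
  using assms by (simp add: kernel_def kernel1_def field_simps)

lemma kernel_le_linear: assumes "k > 0" "s > 0" shows "kernel k s \<le> s / k"
proof -
  have "k/s \<le> exp (k/s)" using exp_ge_add_one_self[of "k/s"] by linarith
  then have "exp (-(k/s)) \<le> s/k" using assms by (simp add: exp_minus field_simps)
  then show ?thesis using assms by (simp add: kernel_def)
qed

text \<open>Continuity at 0 follows from 0 \<le> kernel k s \<le> s/k; elsewhere the kernel is locally
  constant or differentiable.\<close>

lemma kernel_isCont_0: assumes "k > 0" shows "isCont (kernel k) 0"
proof -
  have left: "(kernel k \<longlongrightarrow> 0) (at_left 0)"
    by (rule tendsto_eventually) (simp add: eventually_at_filter kernel_def)
  have right: "(kernel k \<longlongrightarrow> 0) (at_right 0)"
  proof (rule tendsto_sandwich[where f="\<lambda>_. 0" and h="\<lambda>s. s / k"])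
    show "\<forall>\<^sub>F s in at_right 0. kernel k s \<le> s / k"
      using kernel_le_linear[OF assms] by (simp add: eventually_at_filter)
    show "((\<lambda>s. s / k) \<longlongrightarrow> 0) (at_right 0)"
      using assms by (auto intro!: tendsto_eq_intros)
  qed (simp_all add: kernel_nonneg)
  have "(kernel k \<longlongrightarrow> 0) (at 0)"
    using left right by (subst at_eq_sup_left_right) (rule filterlim_sup)
  then show ?thesis by (simp add: isCont_def kernel_def)
qed

lemma kernel_continuous: assumes "k > 0" shows "continuous_on UNIV (kernel k)"
proof -
  have "isCont (kernel k) x" for x
  proof -
    consider "x < 0" | "x = 0" | "x > 0" by linarith
    then show ?thesis
    proof cases
      case 1
      have "((\<lambda>_. 0::real) has_real_derivative 0) (at x)" by simp
      then have "(kernel k has_real_derivative 0) (at x)"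
        by (rule has_field_derivative_transform_within_open[where S="{..<0}"])
           (use 1 in \<open>auto simp: kernel_def\<close>)
      then show ?thesis using DERIV_isCont by blast
    qed (use kernel_isCont_0[OF assms] kernel_deriv DERIV_isCont in blast)+
  qed
  then show ?thesis by (simp add: continuous_at_imp_continuous_on)
qed

lemma kernel_antimono: assumes "0 < k" "k \<le> k'" shows "kernel k' s \<le> kernel k s"
  using assms by (auto simp: kernel_def divide_right_mono)

text \<open>On an interval [a, b] with a > 0, raising k by 1 lowers the kernel by a definite
  amount.  This gap absorbs the error of the cut-off when proving monotonicity in n.\<close>

lemma kernel_gap: assumes "a > 0" "a \<le> s" "s \<le> b" "k > 0"
  shows "kernel k s - kernel (k+1) s \<ge> exp (-k/a) * (1 - exp (-1/b))"
proof -
  have s: "s > 0" using assms by simp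
  have "kernel k s - kernel (k+1) s = exp (-k/s) * (1 - exp (-1/s))"
    using s by (simp add: kernel_def field_simps flip: exp_add)
  moreover have "exp (-k/a) \<le> exp (-k/s)"
    using assms s by (simp add: frac_le)
  moreover have "1 - exp (-1/b) \<le> 1 - exp (-1/s)"
    using assms s by (simp add: frac_le)
  moreover have "0 \<le> 1 - exp (-1/b)" using assms by simp
  ultimately show ?thesis by (metis mult_mono exp_ge_zero)
qed

definition cutoff :: "real \<Rightarrow> real \<Rightarrow> real \<Rightarrow> real" where
  "cutoff \<sigma> d s = smooth_step ((s - \<sigma> - d) / d)"
definition cutoff1 :: "real \<Rightarrow> real \<Rightarrow> real \<Rightarrow> real" where
  "cutoff1 \<sigma> d s = smooth_step1 ((s - \<sigma> - d) / d) / d"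
definition cutoff2 :: "real \<Rightarrow> real \<Rightarrow> real \<Rightarrow> real" where
  "cutoff2 \<sigma> d s = smooth_step2 ((s - \<sigma> - d) / d) / d^2"

lemma cutoff_deriv: assumes "d > 0" shows "(cutoff \<sigma> d has_real_derivative cutoff1 \<sigma> d x) (at x)"
proof -
  have "((\<lambda>s. smooth_step ((s - \<sigma> - d) / d)) has_real_derivative smooth_step1 ((x - \<sigma> - d) / d) * (1 / d)) (at x)"
    by (rule DERIV_chain2[OF smooth_step_deriv]) (use assms in \<open>auto intro!: derivative_eq_intros\<close>)
  then show ?thesis by (simp add: cutoff_def[abs_def] cutoff1_def)
qed

lemma cutoff1_deriv: assumes "d > 0" shows "(cutoff1 \<sigma> d has_real_derivative cutoff2 \<sigma> d x) (at x)"
proof -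
  have "((\<lambda>s. smooth_step1 ((s - \<sigma> - d) / d)) has_real_derivative smooth_step2 ((x - \<sigma> - d) / d) * (1 / d)) (at x)"
    by (rule DERIV_chain2[OF smooth_step1_deriv]) (use assms in \<open>auto intro!: derivative_eq_intros\<close>)
  then have "((\<lambda>s. smooth_step1 ((s - \<sigma> - d) / d) / d) has_real_derivative smooth_step2 ((x - \<sigma> - d) / d) * (1 / d) / d) (at x)"
    by (rule DERIV_cdivide)
  then show ?thesis by (simp add: cutoff1_def[abs_def] cutoff2_def power2_eq_square)
qed

lemma cutoff2_continuous: assumes "d > 0" shows "continuous_on UNIV (cutoff2 \<sigma> d)"
proof -
  have "continuous_on UNIV (\<lambda>s. smooth_step2 ((s - \<sigma> - d) / d) / d^2)"
    using assms by (intro continuous_intros continuous_on_compose2[OF smooth_step2_continuous]) auto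
  then show ?thesis by (simp add: cutoff2_def[abs_def])
qed

lemma cutoff_continuous: assumes "d > 0" shows "continuous_on UNIV (cutoff \<sigma> d)"
  using cutoff_deriv[OF assms] DERIV_isCont continuous_at_imp_continuous_on by blast

lemma cutoff1_continuous: assumes "d > 0" shows "continuous_on UNIV (cutoff1 \<sigma> d)"
  using cutoff1_deriv[OF assms] DERIV_isCont continuous_at_imp_continuous_on by blast

lemma cutoff_below: assumes "d > 0" "s \<le> \<sigma> + d"
  shows "cutoff \<sigma> d s = 0" "cutoff1 \<sigma> d s = 0" "cutoff2 \<sigma> d s = 0"
proof -
  have "(s - \<sigma> - d) / d \<le> 0" using assms by (simp add: divide_nonpos_pos)
  then show "cutoff \<sigma> d s = 0" "cutoff1 \<sigma> d s = 0" "cutoff2 \<sigma> d s = 0"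
    by (simp_all add: cutoff_def cutoff1_def cutoff2_def smooth_step_below)
qed

lemma cutoff_above: assumes "d > 0" "s \<ge> \<sigma> + 2*d"
  shows "cutoff \<sigma> d s = 1" "cutoff1 \<sigma> d s = 0"
proof -
  have "(s - \<sigma> - d) / d \<ge> 1" using assms by (simp add: le_divide_eq)
  then show "cutoff \<sigma> d s = 1" "cutoff1 \<sigma> d s = 0"
    by (simp_all add: cutoff_def cutoff1_def smooth_step_above)
qed

lemma cutoff_range: "0 \<le> cutoff \<sigma> d s" "cutoff \<sigma> d s \<le> 1"
  by (simp_all add: cutoff_def smooth_step_range)

lemma cutoff1_range: assumes "d > 0" shows "0 \<le> cutoff1 \<sigma> d s" "cutoff1 \<sigma> d s \<le> 2 / d"
  using assms smooth_step1_nonneg smooth_step1_le by (simp_all add: cutoff1_def divide_right_mono)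

section \<open>The approximating sequence\<close>

text \<open>The gap by which the kernel drops from k = n+1 to k = n+2 on [\<sigma>, \<sigma>+2] (lemma
  kernel_gap); the cut-off widths are chosen so that f' stays below it on the transition
  region.\<close>

definition kernel_gap :: "real \<Rightarrow> nat \<Rightarrow> real" where
  "kernel_gap \<sigma> n = exp (-(real n + 1)/\<sigma>) * (1 - exp (-1/(\<sigma>+2)))"

lemma kernel_gap_pos: "\<sigma> > 0 \<Longrightarrow> kernel_gap \<sigma> n > 0"
  by (simp add: kernel_gap_def)

lemma kernel_gap_tendsto_0:
  assumes "\<sigma> > 0" shows "kernel_gap \<sigma> \<longlonglongrightarrow> 0"
proof (rule Lim_null_comparison)
  show "\<forall>\<^sub>F n in sequentially. norm (kernel_gap \<sigma> n) \<le> \<sigma> / (real n + 1)^Suc 0"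
  proof (intro always_eventually allI)
    fix n
    have "exp (-(real n + 1)/\<sigma>) \<le> \<sigma> / (real n + 1)"
      using kernel_le_linear[of "real n + 1" \<sigma>] assms by (simp add: kernel_def)
    moreover have "kernel_gap \<sigma> n \<le> exp (-(real n + 1)/\<sigma>)"
      unfolding kernel_gap_def using assms by (simp add: mult_left_le_one_le)
    ultimately show "norm (kernel_gap \<sigma> n) \<le> \<sigma> / (real n + 1)^Suc 0"
      using kernel_gap_pos[OF assms, of n] by simp
  qed
qed (rule tendsto_div_Suc_power)

text \<open>Admissible cut-off widths exist: since f' is continuous at \<sigma> with f'(\<sigma>) = 0, the
  value f'(\<sigma> + 2 delta_n) can be made smaller than any prescribed positive number.\<close>

lemma admissible_widths_exist:
  fixes f1 :: "real \<Rightarrow> real" and m :: "nat \<Rightarrow> real"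
  assumes "continuous_on {0..} f1" "\<sigma> > 0" "f1 \<sigma> = 0" "\<And>n. m n > 0"
  obtains \<delta> :: "nat \<Rightarrow> real"
  where "\<And>n. 0 < \<delta> n" "\<And>n. \<delta> n \<le> 1 / (real n + 1)" "\<And>n. f1 (\<sigma> + 2 * \<delta> n) \<le> m n"
proof -
  have "\<forall>n. \<exists>d. 0 < d \<and> d \<le> 1 / (real n + 1) \<and> f1 (\<sigma> + 2 * d) \<le> m n"
  proof
    fix n
    have "continuous (at \<sigma> within {0..}) f1"
      using assms unfolding continuous_on_eq_continuous_within by simp
    then obtain r where r: "r > 0" "\<forall>t\<in>{0..}. dist t \<sigma> < r \<longrightarrow> dist (f1 t) (f1 \<sigma>) < m n"
      using assms(4)[of n] unfolding continuous_within_eps_delta by blast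
    define d where "d = min (1 / (real n + 1)) (r / 4)"
    have d: "d > 0" "d \<le> 1 / (real n + 1)" "2 * d < r" using r by (auto simp: d_def)
    then have "dist (f1 (\<sigma> + 2 * d)) (f1 \<sigma>) < m n" using r(2) assms by (auto simp: dist_real_def)
    then show "\<exists>d. 0 < d \<and> d \<le> 1 / (real n + 1) \<and> f1 (\<sigma> + 2 * d) \<le> m n"
      using d assms by (auto simp: dist_real_def)
  qed
  then obtain \<delta> where "\<forall>n. 0 < \<delta> n \<and> \<delta> n \<le> 1 / (real n + 1) \<and> f1 (\<sigma> + 2 * \<delta> n) \<le> m n"
    by metis
  then show ?thesis using that by blast
qed

locale approximation_data =
  fixes f f1 f2 f3 :: "real \<Rightarrow> real" and \<sigma> :: real and \<delta> :: "nat \<Rightarrow> real"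
  assumes sigma_pos: "\<sigma> > 0"
    and f_deriv: "\<forall>x\<ge>0. (f has_real_derivative f1 x) (at x within {0..})"
    and f1_cont: "continuous_on {0..} f1"
    and f1_deriv: "\<forall>x>\<sigma>. (f1 has_real_derivative f2 x) (at x)"
    and f2_deriv: "\<forall>x>\<sigma>. (f2 has_real_derivative f3 x) (at x)"
    and f3_cont: "continuous_on {\<sigma><..} f3"
    and f_zero: "f 0 = 0"
    and f_superlin: "filterlim (\<lambda>s. f s / s) at_top at_top"
    and f1_flat: "\<forall>s. 0 \<le> s \<and> s \<le> \<sigma> \<longrightarrow> f1 s = 0"
    and f2_pos: "\<forall>s>\<sigma>. f2 s > 0"
    and delta_pos: "\<And>n. \<delta> n > 0"
    and delta_le: "\<And>n. \<delta> n \<le> 1 / (real n + 1)"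
    and delta_f1: "\<And>n. f1 (\<sigma> + 2 * \<delta> n) \<le> kernel_gap \<sigma> n"
begin

lemma f1_zero: "0 \<le> s \<Longrightarrow> s \<le> \<sigma> \<Longrightarrow> f1 s = 0"
  using f1_flat by blast

lemma f1_cont_on: "continuous_on {\<sigma><..} f1"
  by (intro continuous_at_imp_continuous_on ballI) (meson DERIV_isCont f1_deriv greaterThan_iff)

lemma f2_cont_on: "continuous_on {\<sigma><..} f2"
  by (intro continuous_at_imp_continuous_on ballI) (meson DERIV_isCont f2_deriv greaterThan_iff)

text \<open>f' is nondecreasing on [0, \<infinity>): constant 0 up to \<sigma>, then with positive derivative.\<close>

lemma f1_mono: "0 \<le> x \<Longrightarrow> x \<le> y \<Longrightarrow> f1 x \<le> f1 y"
proof -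
  have mono_right: "f1 x \<le> f1 y" if xy: "\<sigma> \<le> x" "x \<le> y" for x y
  proof (rule DERIV_nonneg_imp_increasing_open[OF xy(2)])
    fix t assume "x < t" "t < y"
    then show "\<exists>y. DERIV f1 t :> y \<and> 0 \<le> y"
      using f1_deriv f2_pos xy by (intro exI[of _ "f2 t"]) (auto intro: less_imp_le)
  next
    show "continuous_on {x..y} f1"
      by (rule continuous_on_subset[OF f1_cont]) (use xy sigma_pos in auto)
  qed
  assume xy: "0 \<le> x" "x \<le> y"
  show "f1 x \<le> f1 y"
  proof (cases "x \<le> \<sigma>")
    case True
    then have "f1 x = f1 \<sigma>" using f1_zero xy sigma_pos by simp
    moreover have "f1 \<sigma> \<le> f1 y"
    proof (cases "y \<le> \<sigma>")
      case True then show ?thesis using f1_zero[of y] f1_zero[of \<sigma>] xy sigma_pos by simp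
    qed (rule mono_right; simp)
    ultimately show ?thesis by simp
  next
    case False then show ?thesis by (intro mono_right) (use xy in auto)
  qed
qed

lemma f1_nonneg: "0 \<le> x \<Longrightarrow> f1 x \<ge> 0"
  using f1_mono[of 0 x] f1_zero[of 0] sigma_pos by simp

lemma f1_pos: "x > \<sigma> \<Longrightarrow> f1 x > 0"
proof -
  assume x: "x > \<sigma>"
  have "f1 \<sigma> < f1 x"
  proof (rule DERIV_pos_imp_increasing_open[OF x])
    fix t assume "\<sigma> < t" "t < x"
    then show "\<exists>y. DERIV f1 t :> y \<and> 0 < y"
      using f1_deriv f2_pos by blast
  next
    show "continuous_on {\<sigma>..x} f1"
      by (rule continuous_on_subset[OF f1_cont]) (use sigma_pos in auto)
  qed
  then show ?thesis using f1_zero[of \<sigma>] sigma_pos by simp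
qed

lemma f_eq_integral: "x \<ge> 0 \<Longrightarrow> f x = integral {0..x} f1"
proof -
  assume x: "x \<ge> 0"
  have "(f1 has_integral (f x - f 0)) {0..x}"
  proof (rule fundamental_theorem_of_calculus[OF x])
    fix t assume "t \<in> {0..x}"
    then have "(f has_real_derivative f1 t) (at t within {0..})" using f_deriv by auto
    then have "(f has_real_derivative f1 t) (at t within {0..x})" by (rule DERIV_subset) auto
    then show "(f has_vector_derivative f1 t) (at t within {0..x})"
      by (simp add: has_real_derivative_iff_has_vector_derivative)
  qed
  then show ?thesis using f_zero by (simp add: integral_unique)
qed

text \<open>A Gronwall-type lower bound: if (ln f')' = f''/f' \<le> M on (\<sigma>, \<sigma>'], then f' stays
  above f'(\<sigma>') exp (-(\<sigma>'-\<sigma>) M) there.\<close>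

lemma f1_lower_bound_from_log_derivative:
  assumes "\<sigma>' > \<sigma>" and ratio: "\<And>t. \<sigma> < t \<Longrightarrow> t \<le> \<sigma>' \<Longrightarrow> f2 t / f1 t \<le> M"
    and t: "\<sigma> < t" "t < \<sigma>'"
  shows "f1 t \<ge> exp (ln (f1 \<sigma>') - (\<sigma>' - \<sigma>) * M)"
proof -
  have "\<exists>z. t < z \<and> z < \<sigma>' \<and> ln (f1 \<sigma>') - ln (f1 t) = (\<sigma>' - t) * (f2 z / f1 z)"
  proof (rule MVT2)
    fix x assume "t \<le> x" "x \<le> \<sigma>'"
    then have x: "x > \<sigma>" using t by simp
    show "((\<lambda>x. ln (f1 x)) has_real_derivative f2 x / f1 x) (at x)"
      using f1_deriv x f1_pos[OF x] by (auto intro!: derivative_eq_intros simp: field_simps)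
  qed (use t in simp)
  then obtain z where z: "t < z" "z < \<sigma>'" "ln (f1 \<sigma>') - ln (f1 t) = (\<sigma>' - t) * (f2 z / f1 z)"
    by blast
  have "(\<sigma>' - t) * (f2 z / f1 z) \<le> (\<sigma>' - \<sigma>) * M"
  proof (rule mult_mono)
    show "f2 z / f1 z \<le> M" using ratio z t by simp
    show "0 \<le> f2 z / f1 z" using f1_pos f2_pos z t by (simp add: less_imp_le)
  qed (use t in auto)
  then have "ln (f1 t) \<ge> ln (f1 \<sigma>') - (\<sigma>' - \<sigma>) * M" using z by simp
  then show ?thesis using f1_pos t by (metis exp_le_cancel_iff exp_ln)
qed

text \<open>Otherwise a \<ge> \<epsilon> on a right
  neighbourhood of \<sigma>, i.e. f''/f' \<le> 1/(\<epsilon> \<sigma>) there, and the previous lemma would keep f'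
  away from 0, contradicting f'(s) \<rightarrow> f'(\<sigma>) = 0.\<close>

lemma a_fun_small_near_sigma:
  assumes amono: "\<sigma>' > \<sigma>" "mono_on {\<sigma>..\<sigma>'} (a_fun \<sigma> f1 f2)"
    and e: "\<epsilon> > 0"
  shows "\<exists>\<eta>>0. \<forall>s. \<sigma> < s \<and> s \<le> \<sigma> + \<eta> \<longrightarrow> f1 s / (s * f2 s) < \<epsilon>"
proof (rule ccontr)
  assume "\<not> ?thesis"
  then have H: "\<forall>\<eta>>0. \<exists>s. \<sigma> < s \<and> s \<le> \<sigma> + \<eta> \<and> f1 s / (s * f2 s) \<ge> \<epsilon>"
    using not_less by blast
  have ratio: "f2 t / f1 t \<le> 1 / (\<epsilon> * \<sigma>)" if t: "\<sigma> < t" "t \<le> \<sigma>'" for t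
  proof -
    obtain s where s: "\<sigma> < s" "s \<le> t" "f1 s / (s * f2 s) \<ge> \<epsilon>"
      using H[rule_format, of "t - \<sigma>"] t by auto
    have "a_fun \<sigma> f1 f2 s \<le> a_fun \<sigma> f1 f2 t"
      using s t by (intro mono_onD[OF amono(2)]) auto
    then have big: "f1 t / (t * f2 t) \<ge> \<epsilon>" using s t by (simp add: a_fun_def)
    have p: "f1 t > 0" "f2 t > 0" "t > 0" using f1_pos f2_pos t sigma_pos by auto
    have "\<epsilon> * (t * f2 t) \<le> f1 t" using big p by (simp add: le_divide_eq)
    moreover have "\<epsilon> * (\<sigma> * f2 t) \<le> \<epsilon> * (t * f2 t)" using p e t by (intro mult_left_mono) auto
    ultimately have "\<epsilon> * \<sigma> * f2 t \<le> f1 t" by (simp add: mult.assoc)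
    then show ?thesis using p e sigma_pos by (simp add: field_simps)
  qed
  define c0 where "c0 = ln (f1 \<sigma>') - (\<sigma>' - \<sigma>) * (1 / (\<epsilon> * \<sigma>))"
  have "(f1 \<longlongrightarrow> f1 \<sigma>) (at \<sigma> within {0..})"
    using f1_cont sigma_pos by (simp add: continuous_on_def)
  then have "(f1 \<longlongrightarrow> 0) (at_right \<sigma>)"
    using f1_zero[of \<sigma>] sigma_pos by (auto elim!: tendsto_mono[rotated] intro!: at_le)
  moreover have "eventually (\<lambda>t. f1 t \<ge> exp c0) (at_right \<sigma>)"
  proof -
    have "eventually (\<lambda>t. t \<in> {\<sigma><..<\<sigma>'}) (at_right \<sigma>)"
      using amono by (intro eventually_at_right_real) auto
    then show ?thesis unfolding c0_def
      by eventually_elim (use f1_lower_bound_from_log_derivative[OF amono(1) ratio] in auto)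
  qed
  ultimately have "0 \<ge> exp c0"
    by (intro tendsto_lowerbound[of f1 0 "at_right \<sigma>" "exp c0"]) auto
  then show False by simp
qed

text \<open>trunc1 d = cutoff * f' and its first two derivatives.  Since the cut-off vanishes up
  to \<sigma>+d, trunc1 d is C2 on the whole line even though f' is only C1 away from \<sigma>.\<close>

definition trunc1 :: "real \<Rightarrow> real \<Rightarrow> real" where
  "trunc1 d s = cutoff \<sigma> d s * f1 s"
definition trunc2 :: "real \<Rightarrow> real \<Rightarrow> real" where
  "trunc2 d s = cutoff1 \<sigma> d s * f1 s + cutoff \<sigma> d s * f2 s"
definition trunc3 :: "real \<Rightarrow> real \<Rightarrow> real" where
  "trunc3 d s = cutoff2 \<sigma> d s * f1 s + 2 * cutoff1 \<sigma> d s * f2 s + cutoff \<sigma> d s * f3 s"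

lemma trunc1_deriv: assumes d: "d > 0" shows "(trunc1 d has_real_derivative trunc2 d x) (at x)"
proof (cases "x > \<sigma>")
  case True
  then show ?thesis unfolding trunc1_def[abs_def] trunc2_def
    using cutoff_deriv[OF d] f1_deriv
    by (auto intro!: derivative_eq_intros)
next
  case False
  have "((\<lambda>_. 0) has_real_derivative 0) (at x)" by simp
  then have "(trunc1 d has_real_derivative 0) (at x)"
    by (rule has_field_derivative_transform_within_open[where S="{..<\<sigma>+d}"])
       (use False d in \<open>auto simp: trunc1_def cutoff_below\<close>)
  moreover have "trunc2 d x = 0" using False d by (simp add: trunc2_def cutoff_below)
  ultimately show ?thesis by simp
qed

lemma trunc2_deriv: assumes d: "d > 0" shows "(trunc2 d has_real_derivative trunc3 d x) (at x)"
proof (cases "x > \<sigma>")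
  case True
  then show ?thesis unfolding trunc2_def[abs_def] trunc3_def
    using cutoff_deriv[OF d] cutoff1_deriv[OF d] f1_deriv f2_deriv
    by (auto intro!: derivative_eq_intros simp: algebra_simps)
next
  case False
  have "((\<lambda>_. 0) has_real_derivative 0) (at x)" by simp
  then have "(trunc2 d has_real_derivative 0) (at x)"
    by (rule has_field_derivative_transform_within_open[where S="{..<\<sigma>+d}"])
       (use False d in \<open>auto simp: trunc2_def cutoff_below\<close>)
  moreover have "trunc3 d x = 0" using False d by (simp add: trunc3_def cutoff_below)
  ultimately show ?thesis by simp
qed

lemma trunc1_continuous: assumes d: "d > 0" shows "continuous_on UNIV (trunc1 d)"
  by (intro continuous_at_imp_continuous_on ballI DERIV_isCont[OF trunc1_deriv[OF d]])

lemma trunc3_continuous: assumes d: "d > 0" shows "continuous_on UNIV (trunc3 d)"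
proof -
  have "continuous_on ({\<sigma><..} \<union> {..<\<sigma>+d}) (trunc3 d)"
  proof (rule continuous_on_open_Un)
    show "continuous_on {\<sigma><..} (trunc3 d)" unfolding trunc3_def[abs_def]
      using cutoff2_continuous[OF d] cutoff1_continuous[OF d] cutoff_continuous[OF d] f1_cont_on f2_cont_on f3_cont
      by (intro continuous_intros; blast intro: continuous_on_subset)
    have "continuous_on {..<\<sigma>+d} (\<lambda>_. 0::real)" by simp
    then show "continuous_on {..<\<sigma>+d} (trunc3 d)"
      by (rule continuous_on_cong[THEN iffD1, rotated 2]) (use d in \<open>auto simp: trunc3_def cutoff_below\<close>)
  qed auto
  moreover have "{\<sigma><..} \<union> {..<\<sigma>+d} = UNIV" using d by auto
  ultimately show ?thesis by simp
qed

text \<open>The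
  primitive Fn n is taken from -1 rather than 0 so that it is differentiable at 0 (where
  Fn1 n vanishes anyway); this gives convexity on [0, \<infinity>) directly.\<close>

definition Fn1 :: "nat \<Rightarrow> real \<Rightarrow> real" where
  "Fn1 n s = trunc1 (\<delta> n) s + kernel (real n + 1) s"
definition Fn2 :: "nat \<Rightarrow> real \<Rightarrow> real" where
  "Fn2 n s = trunc2 (\<delta> n) s + kernel1 (real n + 1) s"
definition Fn3 :: "nat \<Rightarrow> real \<Rightarrow> real" where
  "Fn3 n s = trunc3 (\<delta> n) s + kernel2 (real n + 1) s"
definition Fn :: "nat \<Rightarrow> real \<Rightarrow> real" where
  "Fn n x = integral {-1..x} (Fn1 n)"

lemma delta_le1: "\<delta> n \<le> 1"
  using delta_le[of n] order.trans[of "\<delta> n" "1 / (real n + 1)" 1] by simp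

lemma Fn1_continuous: "continuous_on UNIV (Fn1 n)"
  unfolding Fn1_def[abs_def]
  using trunc1_continuous[OF delta_pos] kernel_continuous[of "real n + 1"] by (intro continuous_intros) auto

lemma Fn1_deriv: "x > 0 \<Longrightarrow> (Fn1 n has_real_derivative Fn2 n x) (at x)"
  unfolding Fn1_def[abs_def] Fn2_def
  using trunc1_deriv[OF delta_pos] kernel_deriv by (auto intro!: derivative_eq_intros)

lemma Fn2_deriv: "x > 0 \<Longrightarrow> (Fn2 n has_real_derivative Fn3 n x) (at x)"
  unfolding Fn2_def[abs_def] Fn3_def
  using trunc2_deriv[OF delta_pos] kernel1_deriv by (auto intro!: derivative_eq_intros)

lemma Fn3_continuous: "continuous_on {0<..} (Fn3 n)"
  unfolding Fn3_def[abs_def]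
  using trunc3_continuous[OF delta_pos] kernel2_continuous
  by (intro continuous_intros) (auto intro: continuous_on_subset)

lemma Fn1_nonpos: "s \<le> 0 \<Longrightarrow> Fn1 n s = 0"
  using delta_pos[of n] sigma_pos by (simp add: Fn1_def trunc1_def cutoff_below kernel_nonpos)

lemma Fn_below_sigma: "s \<le> \<sigma> \<Longrightarrow> Fn1 n s = kernel (real n + 1) s \<and> Fn2 n s = kernel1 (real n + 1) s"
  using delta_pos[of n] sigma_pos by (simp add: Fn1_def Fn2_def trunc1_def trunc2_def cutoff_below)

lemma Fn_above_cutoff: "s \<ge> \<sigma> + 2 * \<delta> n \<Longrightarrow> Fn1 n s = f1 s + kernel (real n + 1) s \<and> Fn2 n s = f2 s + kernel1 (real n + 1) s"
  using delta_pos[of n] sigma_pos by (simp add: Fn1_def Fn2_def trunc1_def trunc2_def cutoff_above)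

lemma Fn2_pos: "x > 0 \<Longrightarrow> Fn2 n x > 0"
proof -
  assume x: "x > 0"
  have a: "cutoff1 \<sigma> (\<delta> n) x * f1 x \<ge> 0"
    using cutoff1_range[OF delta_pos] f1_nonneg x by simp
  have b: "cutoff \<sigma> (\<delta> n) x * f2 x \<ge> 0"
  proof (cases "x > \<sigma>")
    case True then show ?thesis using cutoff_range(1) f2_pos by (simp add: less_imp_le)
  next
    case False then show ?thesis using cutoff_below[OF delta_pos] sigma_pos delta_pos[of n] by simp
  qed
  have "kernel1 (real n + 1) x > 0" using x by (intro kernel1_pos) auto
  then show ?thesis using a b by (simp add: Fn2_def trunc2_def)
qed

lemma Fn_deriv: "x > -1 \<Longrightarrow> (Fn n has_real_derivative Fn1 n x) (at x)"
  unfolding Fn_def[abs_def] by (rule integral_has_real_derivative_at[OF Fn1_continuous])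

lemma Fn_zero: "Fn n 0 = 0"
proof -
  have "(Fn1 n has_integral 0) {-1..0}"
    by (rule has_integral_eq[where f="\<lambda>_. 0", OF _ has_integral_0]) (simp add: Fn1_nonpos)
  then show ?thesis unfolding Fn_def by (simp add: integral_unique)
qed

lemma Fn_eq_integral: "x \<ge> 0 \<Longrightarrow> Fn n x = integral {0..x} (Fn1 n)"
proof -
  assume x: "x \<ge> 0"
  have "integral {-1..0} (Fn1 n) + integral {0..x} (Fn1 n) = integral {-1..x} (Fn1 n)"
    by (rule Henstock_Kurzweil_Integration.integral_combine) (use x Fn1_continuous in \<open>auto intro: integrable_continuous_interval continuous_on_subset\<close>)
  moreover have "integral {-1..0} (Fn1 n) = 0"
    using Fn_zero unfolding Fn_def by simp
  ultimately show ?thesis unfolding Fn_def by simp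
qed

lemma Fn1_mono: "0 \<le> x \<Longrightarrow> x \<le> y \<Longrightarrow> Fn1 n x \<le> Fn1 n y"
proof -
  assume xy: "0 \<le> x" "x \<le> y"
  show ?thesis
  proof (rule DERIV_nonneg_imp_increasing_open[OF xy(2)])
    fix t assume "x < t" "t < y"
    then have "t > 0" using xy by simp
    then show "\<exists>y. DERIV (Fn1 n) t :> y \<and> 0 \<le> y"
      using Fn1_deriv Fn2_pos by (blast intro: less_imp_le)
  next
    show "continuous_on {x..y} (Fn1 n)" using Fn1_continuous by (rule continuous_on_subset) auto
  qed
qed

lemma Fn_convex: "convex_on {0..} (Fn n)"
proof (rule convex_on_realI[where f'="Fn1 n"])
  show "connected {0::real..}" by simp
  fix x assume "x \<in> {0::real..}"
  then show "(Fn n has_real_derivative Fn1 n x) (at x)" by (intro Fn_deriv) auto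
next
  fix x y :: real assume "x \<in> {0..}" "y \<in> {0..}" "x \<le> y"
  then show "Fn1 n x \<le> Fn1 n y" by (intro Fn1_mono) auto
qed

text \<open>Below \<sigma> and above the transition region this is
  the monotonicity of the kernel in k; on the transition region (\<sigma>, \<sigma>+2 delta_n) the loss
  of cut-off mass is at most f'(\<sigma>+2 delta_n), which the kernel gap dominates.\<close>

lemma Fn1_decreasing: "x \<ge> 0 \<Longrightarrow> Fn1 (Suc n) x \<le> Fn1 n x"
proof -
  assume x0: "x \<ge> 0"
  define k where "k = real n + 1"
  have k: "k > 0" "real (Suc n) + 1 = k + 1" unfolding k_def by auto
  have hk: "kernel (k+1) x \<le> kernel k x" using k by (intro kernel_antimono) auto
  have th: "0 \<le> cutoff \<sigma> d x" "cutoff \<sigma> d x \<le> 1" for d using cutoff_range by auto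
  have f1x: "f1 x \<ge> 0" using f1_nonneg x0 by simp
  have ge: "Fn1 n x \<ge> kernel k x"
    using th f1x unfolding Fn1_def trunc1_def k_def by (simp add: mult_nonneg_nonneg)
  have up: "Fn1 (Suc n) x \<le> f1 x + kernel (k+1) x"
    using th[of "\<delta> (Suc n)"] f1x unfolding Fn1_def trunc1_def k(2) by (simp add: mult_left_le_one_le)
  consider "x \<le> \<sigma>" | "x \<ge> \<sigma> + 2 * \<delta> n" | "\<sigma> < x \<and> x < \<sigma> + 2 * \<delta> n" by linarith
  then show ?thesis
  proof cases
    case 1
    then show ?thesis using Fn_below_sigma[OF 1, of n] Fn_below_sigma[OF 1, of "Suc n"] hk k(2) k_def by simp
  next
    case 2
    then show ?thesis using Fn_above_cutoff[OF 2] up hk k_def by simp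
  next
    case 3
    have "f1 x \<le> f1 (\<sigma> + 2 * \<delta> n)" using 3 x0 by (intro f1_mono) auto
    also have "\<dots> \<le> kernel_gap \<sigma> n" by (rule delta_f1)
    also have "\<dots> \<le> kernel k x - kernel (k+1) x"
      unfolding kernel_gap_def k_def
      using kernel_gap[of \<sigma> x "\<sigma> + 2" "real n + 1"] 3 sigma_pos delta_le1[of n] by simp
    finally show ?thesis using up ge by simp
  qed
qed

text \<open>Fn1 n differs from f' from below by at most the constant f'(\<sigma>+2); integrating, Fn n
  inherits the superlinear growth of f.\<close>

lemma Fn1_lower_bound: "x \<ge> 0 \<Longrightarrow> Fn1 n x \<ge> f1 x - f1 (\<sigma> + 2)"
proof -
  assume x0: "x \<ge> 0"
  have f1x: "f1 x \<ge> 0" using f1_nonneg x0 by simp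
  have ge: "Fn1 n x \<ge> cutoff \<sigma> (\<delta> n) x * f1 x"
    unfolding Fn1_def trunc1_def using kernel_nonneg by simp
  show ?thesis
  proof (cases "x \<ge> \<sigma> + 2 * \<delta> n")
    case True
    have "0 \<le> kernel (real n + 1) x" "0 \<le> f1 (\<sigma>+2)" using kernel_nonneg f1_nonneg[of "\<sigma>+2"] sigma_pos by auto
    then show ?thesis using Fn_above_cutoff[OF True] by simp
  next
    case False
    then have "f1 x \<le> f1 (\<sigma> + 2)" using x0 delta_le1[of n] by (intro f1_mono) auto
    moreover have "0 \<le> cutoff \<sigma> (\<delta> n) x * f1 x" using cutoff_range f1x by simp
    ultimately show ?thesis using ge by simp
  qed
qed

lemma Fn_superlinear: "filterlim (\<lambda>s. Fn n s / s) at_top at_top"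
proof -
  define M where "M = f1 (\<sigma> + 2)"
  have "filterlim (\<lambda>s. - M + f s / s) at_top at_top"
    by (rule filterlim_tendsto_add_at_top[OF tendsto_const f_superlin])
  moreover have "eventually (\<lambda>s. - M + f s / s \<le> Fn n s / s) at_top"
    using eventually_gt_at_top[of 0]
  proof eventually_elim
    case (elim x)
    have int1: "Fn1 n integrable_on {0..x}" "f1 integrable_on {0..x}"
      by (rule integrable_continuous_interval, rule continuous_on_subset[OF Fn1_continuous], simp)
         (rule integrable_continuous_interval, rule continuous_on_subset[OF f1_cont], auto)
    have "integral {0..x} (\<lambda>s. f1 s - M) \<le> integral {0..x} (Fn1 n)"
      using int1 Fn1_lower_bound unfolding M_def by (intro integral_le integrable_diff integrable_const_ivl) auto
    moreover have "integral {0..x} (\<lambda>s. f1 s - M) = f x - x * M"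
      using int1 f_eq_integral[of x] elim by (simp add: integral_diff integrable_const_ivl)
    ultimately have "f x - x * M \<le> Fn n x" using Fn_eq_integral[of x] elim by simp
    then have "(f x - x * M) / x \<le> Fn n x / x" by (rule divide_right_mono) (use elim in auto)
    moreover have "(f x - x * M) / x = - M + f x / x" using elim by (simp add: field_simps)
    ultimately show ?case by simp
  qed
  ultimately show ?thesis by (rule filterlim_at_top_mono)
qed

text \<open>Near 0 the approximants consist of the kernel alone, which is flat.\<close>

lemma Fn_cubic_quotient_tendsto_0: "((\<lambda>s. (s * Fn2 n s - Fn1 n s) / s^3) \<longlongrightarrow> 0) (at_right 0)"
proof (rule Lim_null_comparison)
  define k where "k = real n + 1"
  have k: "k > 0" unfolding k_def by simp
  show "\<forall>\<^sub>F s in at_right 0. norm ((s * Fn2 n s - Fn1 n s) / s^3) \<le> 3125 * (s / k^4 + s^2 / k^5)"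
    using eventually_at_right_real[OF sigma_pos]
  proof eventually_elim
    case (elim s)
    then have "s \<le> \<sigma>" "s > 0" by auto
    then show ?case using Fn_below_sigma[of s n] kernel_cubic_bound[OF k, of s] unfolding k_def by simp
  qed
  show "((\<lambda>s. 3125 * (s / k^4 + s^2 / k^5)) \<longlongrightarrow> 0) (at_right 0)"
    using k by (auto intro!: tendsto_eq_intros)
qed

lemma Fn1_quotient_tendsto_0: "((\<lambda>s. Fn1 n s / s) \<longlongrightarrow> 0) (at_right 0)"
proof (rule Lim_null_comparison)
  define k where "k = real n + 1"
  have k: "k > 0" unfolding k_def by simp
  show "\<forall>\<^sub>F s in at_right 0. norm (Fn1 n s / s) \<le> 3125 * s^4 / k^5"
    using eventually_at_right_real[OF sigma_pos]
  proof eventually_elim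
    case (elim s)
    then have "s \<le> \<sigma>" "s > 0" by auto
    then show ?case using Fn_below_sigma[of s n] kernel_div_bound[OF k, of s] kernel_nonneg[of k s] unfolding k_def by simp
  qed
  show "((\<lambda>s. 3125 * s^4 / k^5) \<longlongrightarrow> 0) (at_right 0)"
    using k by (auto intro!: tendsto_eq_intros)
qed

text \<open>Pointwise error of Fn1 n on [0, R]: the cut-off removes at most f'(\<sigma>+2 delta_n),
  which is below the kernel gap, and the kernel adds at most a multiple of R^5/(n+1)^5.\<close>

lemma Fn1_error:
  assumes "0 \<le> t" "t \<le> R"
  shows "\<bar>Fn1 n t - f1 t\<bar> \<le> kernel_gap \<sigma> n + 3125 * R^5 / (real n + 1)^5"
proof -
  have th: "0 \<le> cutoff \<sigma> (\<delta> n) t" "cutoff \<sigma> (\<delta> n) t \<le> 1" using cutoff_range by auto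
  have f1t: "f1 t \<ge> 0" using f1_nonneg assms by simp
  have eq: "Fn1 n t - f1 t = kernel (real n + 1) t - (1 - cutoff \<sigma> (\<delta> n) t) * f1 t"
    unfolding Fn1_def trunc1_def by (simp add: algebra_simps)
  have cut: "(1 - cutoff \<sigma> (\<delta> n) t) * f1 t \<le> kernel_gap \<sigma> n"
  proof (cases "t \<ge> \<sigma> + 2 * \<delta> n")
    case True then show ?thesis using cutoff_above[OF delta_pos True] kernel_gap_pos[OF sigma_pos, of n] by simp
  next
    case False
    have "(1 - cutoff \<sigma> (\<delta> n) t) * f1 t \<le> f1 t"
      using th f1t by (simp add: mult_left_le_one_le)
    also have "\<dots> \<le> f1 (\<sigma> + 2 * \<delta> n)" using False assms by (intro f1_mono) auto
    also have "\<dots> \<le> kernel_gap \<sigma> n" by (rule delta_f1)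
    finally show ?thesis .
  qed
  have "0 \<le> (1 - cutoff \<sigma> (\<delta> n) t) * f1 t" using th f1t by simp
  moreover have "kernel (real n + 1) t \<le> 3125 * R^5 / (real n + 1)^5"
    using kernel_bounds_upto(1)[of "real n + 1" R t] assms by simp
  ultimately show ?thesis using cut kernel_nonneg[of "real n + 1" t] unfolding eq by linarith
qed

lemma Fn1_error_tendsto_0: "(\<lambda>n. kernel_gap \<sigma> n + 3125 * R^5 / (real n + 1)^5) \<longlonglongrightarrow> 0"
  using tendsto_add_zero[OF kernel_gap_tendsto_0[OF sigma_pos] tendsto_div_Suc_power[of "3125 * R^5" 4]]
  by (simp add: eval_nat_numeral)

lemma Fn1_uniform_limit:
  assumes "compact K" "K \<subseteq> {0..}" shows "uniform_limit K Fn1 f1 sequentially"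
proof -
  obtain R where R: "R \<ge> 0" "\<And>x. x \<in> K \<Longrightarrow> x \<le> R" using compact_upper_bound[OF assms(1)] by blast
  show ?thesis
  proof (rule uniform_limit_by_bound[OF _ Fn1_error_tendsto_0])
    show "\<forall>\<^sub>F n in sequentially. \<forall>x\<in>K. \<bar>Fn1 n x - f1 x\<bar> \<le> kernel_gap \<sigma> n + 3125 * R^5 / (real n + 1)^5"
      using Fn1_error R assms by (intro always_eventually) auto
  qed
qed

lemma Fn_uniform_limit:
  assumes "compact K" "K \<subseteq> {0..}" shows "uniform_limit K Fn f sequentially"
proof -
  obtain R where R: "R \<ge> 0" "\<And>x. x \<in> K \<Longrightarrow> x \<le> R" using compact_upper_bound[OF assms(1)] by blast
  define b where "b n = kernel_gap \<sigma> n + 3125 * R^5 / (real n + 1)^5" for n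
  show ?thesis
  proof (rule uniform_limit_by_bound)
    show "\<forall>\<^sub>F n in sequentially. \<forall>x\<in>K. \<bar>Fn n x - f x\<bar> \<le> b n * R"
    proof (intro always_eventually allI ballI)
      fix n x assume x: "x \<in> K"
      then have x0: "0 \<le> x" "x \<le> R" using assms R by auto
      have cG: "continuous_on {0..x} (Fn1 n)" using Fn1_continuous by (rule continuous_on_subset) auto
      have cf: "continuous_on {0..x} f1" using f1_cont by (rule continuous_on_subset) auto
      have "Fn n x - f x = integral {0..x} (\<lambda>s. Fn1 n s - f1 s)"
        using Fn_eq_integral[OF x0(1)] f_eq_integral[OF x0(1)]
        by (simp add: integral_diff integrable_continuous_interval cG cf)
      moreover have "norm (integral {0..x} (\<lambda>s. Fn1 n s - f1 s)) \<le> b n * (x - 0)"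
      proof (rule integral_bound)
        show "continuous_on {0..x} (\<lambda>s. Fn1 n s - f1 s)" using cG cf by (intro continuous_intros)
        fix t assume "t \<in> {0..x}"
        then show "norm (Fn1 n t - f1 t) \<le> b n" unfolding b_def using Fn1_error[of t R n] x0 by auto
      qed (use x0 in auto)
      moreover have "b n * x \<le> b n * R"
        using x0 kernel_gap_pos[OF sigma_pos, of n] R unfolding b_def by (intro mult_left_mono) auto
      ultimately show "\<bar>Fn n x - f x\<bar> \<le> b n * R" by simp
    qed
    show "(\<lambda>n. b n * R) \<longlonglongrightarrow> 0"
      unfolding b_def by (intro tendsto_mult_left_zero Fn1_error_tendsto_0)
  qed
qed

text \<open>On [0, \<sigma>) the approximants are given by the kernel alone, so the kernel estimates
  yield bounds that are uniform in x and decay in n.\<close>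

lemma Fn_cubic_quotient_bound:
  assumes "0 \<le> x" "x < \<sigma>"
  shows "\<bar>(x * Fn2 n x - Fn1 n x) / x^3\<bar> \<le> 3125 * \<sigma> / (real n + 1)^4 + 3125 * \<sigma>^2 / (real n + 1)^5"
proof (cases "x = 0")
  case False
  then have xp: "x > 0" using assms by simp
  have k: "real n + 1 > 0" by simp
  have "\<bar>(x * Fn2 n x - Fn1 n x) / x^3\<bar> \<le> 3125 * (x / (real n + 1)^4 + x^2 / (real n + 1)^5)"
    using Fn_below_sigma[of x n] assms kernel_cubic_bound[OF k xp] by simp
  also have "\<dots> \<le> 3125 * (\<sigma> / (real n + 1)^4 + \<sigma>^2 / (real n + 1)^5)"
    using assms xp by (intro mult_left_mono add_mono divide_right_mono power_mono) auto
  finally show ?thesis by (simp add: algebra_simps)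
qed (use sigma_pos in simp)

lemma Fn1_quotient_bound:
  assumes "0 \<le> x" "x < \<sigma>"
  shows "\<bar>Fn1 n x / x\<bar> \<le> 3125 * \<sigma>^4 / (real n + 1)^5"
proof (cases "x = 0")
  case False
  then have xp: "x > 0" using assms by simp
  have k: "real n + 1 > 0" by simp
  have "\<bar>Fn1 n x / x\<bar> \<le> 3125 * x^4 / (real n + 1)^5"
    using Fn_below_sigma[of x n] assms kernel_div_bound[OF k xp] kernel_nonneg[of "real n + 1" x] xp
    by simp
  also have "\<dots> \<le> 3125 * \<sigma>^4 / (real n + 1)^5"
    using assms xp by (intro mult_left_mono divide_right_mono power_mono) auto
  finally show ?thesis .
qed (use sigma_pos in simp)

lemma Fn_cubic_quotient_uniform_limit:
  assumes "K \<subseteq> {0..<\<sigma>}"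
  shows "uniform_limit K (\<lambda>n s. (s * Fn2 n s - Fn1 n s) / s^3) (\<lambda>s. 0) sequentially"
proof (rule uniform_limit_by_bound)
  show "\<forall>\<^sub>F n in sequentially. \<forall>x\<in>K. \<bar>(x * Fn2 n x - Fn1 n x) / x^3 - 0\<bar>
      \<le> 3125 * \<sigma> / (real n + 1)^Suc 3 + 3125 * \<sigma>^2 / (real n + 1)^Suc 4"
    using Fn_cubic_quotient_bound assms by (intro always_eventually) (auto simp: eval_nat_numeral)
qed (intro tendsto_add_zero tendsto_div_Suc_power)

lemma Fn1_quotient_uniform_limit:
  assumes "K \<subseteq> {0..<\<sigma>}"
  shows "uniform_limit K (\<lambda>n s. Fn1 n s / s) (\<lambda>s. 0) sequentially"
proof (rule uniform_limit_by_bound)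
  show "\<forall>\<^sub>F n in sequentially. \<forall>x\<in>K. \<bar>Fn1 n x / x - 0\<bar> \<le> 3125 * \<sigma>^4 / (real n + 1)^Suc 4"
    using Fn1_quotient_bound assms by (intro always_eventually) (auto simp: eval_nat_numeral)
qed (rule tendsto_div_Suc_power)

lemma eventually_delta_less: "c > 0 \<Longrightarrow> eventually (\<lambda>n. 2 * \<delta> n < c) sequentially"
proof -
  assume "c > 0"
  then have "eventually (\<lambda>n. 1 / (real n + 1)^Suc 0 < c/2) sequentially"
    by (intro eventually_div_Suc_power_less) auto
  then show ?thesis
  proof eventually_elim
    case (elim n) then show ?case using delta_le[of n] by simp
  qed
qed

text \<open>Close to \<sigma>, where a is small by a_fun_small_near_sigma, a_n is small as well:
  each of the three summands of Fn1 n is at most \<epsilon> x times the corresponding summand of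
  Fn2 n, the kernel part because kernel k x = (x^2/k) kernel1 k x.  As both a_n and a lie
  in [0, \<epsilon>], they are \<epsilon>-close.\<close>

lemma a_fun_near_sigma:
  assumes x: "0 < x" "x \<le> \<sigma> + \<eta>" and e: "\<epsilon> \<ge> 0"
    and small: "\<And>s. \<sigma> < s \<Longrightarrow> s \<le> \<sigma> + \<eta> \<Longrightarrow> f1 s / (s * f2 s) \<le> \<epsilon>"
  shows "0 \<le> a_fun \<sigma> f1 f2 x" "a_fun \<sigma> f1 f2 x \<le> \<epsilon>"
  using x e small[of x] f1_nonneg[of x] f2_pos by (auto simp: a_fun_def intro!: divide_nonneg_pos)

lemma Fn_a_near_sigma:
  assumes x: "0 < x" "x \<le> \<sigma> + \<eta>" and e: "\<epsilon> \<ge> 0"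
    and small: "\<And>s. \<sigma> < s \<Longrightarrow> s \<le> \<sigma> + \<eta> \<Longrightarrow> f1 s / (s * f2 s) \<le> \<epsilon>"
    and n: "x / (real n + 1) \<le> \<epsilon>"
  shows "\<bar>Fn1 n x / (x * Fn2 n x) - a_fun \<sigma> f1 f2 x\<bar> \<le> \<epsilon>"
proof -
  define k where "k = real n + 1"
  have k: "k > 0" unfolding k_def by simp
  have th: "0 \<le> cutoff \<sigma> (\<delta> n) x" using cutoff_range by auto
  have cut: "cutoff \<sigma> (\<delta> n) x * f1 x \<le> \<epsilon> * x * (cutoff \<sigma> (\<delta> n) x * f2 x)"
  proof (cases "x > \<sigma>")
    case True
    then have "f1 x \<le> \<epsilon> * (x * f2 x)"
      using small[of x] x f2_pos by (simp add: divide_le_eq)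
    then have "cutoff \<sigma> (\<delta> n) x * f1 x \<le> cutoff \<sigma> (\<delta> n) x * (\<epsilon> * (x * f2 x))"
      using th by (rule mult_left_mono)
    then show ?thesis by (simp add: algebra_simps)
  next
    case False
    then have "cutoff \<sigma> (\<delta> n) x = 0" by (intro cutoff_below(1)) (use delta_pos[of n] in auto)
    then show ?thesis by simp
  qed
  have ker: "kernel k x \<le> \<epsilon> * x * kernel1 k x"
  proof -
    have "x * (x / k) * kernel1 k x \<le> x * \<epsilon> * kernel1 k x"
      using x n kernel1_nonneg[of k x] k unfolding k_def by (intro mult_right_mono mult_left_mono) auto
    then show ?thesis using kernel_eq_kernel1[OF k x(1)] by (simp add: power2_eq_square algebra_simps)
  qed
  have "0 \<le> \<epsilon> * x * (cutoff1 \<sigma> (\<delta> n) x * f1 x)"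
    using cutoff1_range[OF delta_pos] f1_nonneg[of x] x e by simp
  then have "Fn1 n x \<le> \<epsilon> * x * Fn2 n x"
    using cut ker unfolding Fn1_def Fn2_def trunc1_def trunc2_def k_def by (simp add: algebra_simps)
  moreover have "0 \<le> Fn1 n x"
    unfolding Fn1_def trunc1_def using th f1_nonneg[of x] x kernel_nonneg by simp
  moreover have "x * Fn2 n x > 0" using Fn2_pos x by simp
  ultimately have "0 \<le> Fn1 n x / (x * Fn2 n x)" "Fn1 n x / (x * Fn2 n x) \<le> \<epsilon>"
    by (simp_all add: divide_le_eq mult.commute mult.left_commute)
  then show ?thesis using a_fun_near_sigma[OF x e small] by linarith
qed

text \<open>Beyond the transition region Fn1 n = f' + kernel and Fn2 n = f'' + kernel1, so the
  quotient perturbation estimate applies once f'' is bounded below by m > 0.\<close>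

lemma Fn_a_far:
  assumes x: "\<sigma> + 2 * \<delta> n \<le> x" "c \<le> x" "x \<le> R" "c > 0" and m: "m > 0" "m \<le> f2 x"
  shows "\<bar>Fn1 n x / (x * Fn2 n x) - a_fun \<sigma> f1 f2 x\<bar>
    \<le> 3125 * R^5 / (real n + 1)^5 / (c * m) + f1 R * (3125 * R^3 / (real n + 1)^4) / (c * m^2)"
proof -
  have xs: "x > \<sigma>" using x delta_pos[of n] by linarith
  have kb: "kernel (real n + 1) x \<le> 3125 * R^5 / (real n + 1)^5"
    "kernel1 (real n + 1) x \<le> 3125 * R^3 / (real n + 1)^4"
    using kernel_bounds_upto[of "real n + 1" R x] x by auto
  have "\<bar>(f1 x + kernel (real n + 1) x) / (x * (f2 x + kernel1 (real n + 1) x)) - f1 x / (x * f2 x)\<bar>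
    \<le> 3125 * R^5 / (real n + 1)^5 / (c * m) + f1 R * (3125 * R^3 / (real n + 1)^4) / (c * m^2)"
    by (rule quotient_perturbation_bound)
       (use x m kb f1_nonneg[of x] f1_mono[of x R] kernel_nonneg kernel1_nonneg in auto)
  moreover have "a_fun \<sigma> f1 f2 x = f1 x / (x * f2 x)" using xs by (simp add: a_fun_def)
  ultimately show ?thesis using Fn_above_cutoff[OF x(1)] by simp
qed

text \<open>Uniform convergence of a_n: given \<epsilon>, split K at \<sigma>+\<eta> where a < \<epsilon>/2; on the left
  part both a_n and a lie in [0, \<epsilon>/2], on the right part f'' has a positive minimum.\<close>

lemma Fn_a_uniform_limit:
  assumes am: "\<sigma>' > \<sigma>" "mono_on {\<sigma>..\<sigma>'} (a_fun \<sigma> f1 f2)" and K: "compact K" "K \<subseteq> {0<..}"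
  shows "uniform_limit K (\<lambda>n s. Fn1 n s / (s * Fn2 n s)) (a_fun \<sigma> f1 f2) sequentially"
proof (rule uniform_limitI)
  fix e :: real assume e: "e > 0"
  obtain c where c: "c > 0" "\<And>x. x \<in> K \<Longrightarrow> c \<le> x" using compact_lower_bound[OF K] by blast
  obtain R where R: "R \<ge> 0" "\<And>x. x \<in> K \<Longrightarrow> x \<le> R" using compact_upper_bound[OF K(1)] by blast
  obtain \<eta> where eta: "\<eta> > 0" "\<And>s. \<sigma> < s \<Longrightarrow> s \<le> \<sigma> + \<eta> \<Longrightarrow> f1 s / (s * f2 s) \<le> e/2"
    using a_fun_small_near_sigma[OF am, of "e/2"] e by (auto intro: less_imp_le)
  define K2 where "K2 = K \<inter> {\<sigma>+\<eta>..}"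
  have K2: "compact K2" "K2 \<subseteq> {\<sigma><..}" unfolding K2_def using K(1) eta by (auto intro: compact_Int_closed)
  obtain m where m: "m > 0" "\<And>x. x \<in> K2 \<Longrightarrow> m \<le> f2 x"
    by (rule compact_positive_minimum[OF K2(1) continuous_on_subset[OF f2_cont_on K2(2)]])
       (use K2 f2_pos in auto)
  define bnd where "bnd n = 3125 * R^5 / (real n + 1)^5 / (c * m)
    + f1 R * (3125 * R^3 / (real n + 1)^4) / (c * m^2)" for n
  have "(\<lambda>n. 3125 * R^5 / (c*m) / (real n + 1)^Suc 4
      + 3125 * R^3 * f1 R / (c * m^2) / (real n + 1)^Suc 3) \<longlonglongrightarrow> 0"
    by (intro tendsto_add_zero tendsto_div_Suc_power)
  then have "bnd \<longlonglongrightarrow> 0" unfolding bnd_def by (simp add: field_simps)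
  then have ev_bnd: "eventually (\<lambda>n. bnd n < e) sequentially" using e by (rule order_tendstoD(2))
  have ev_R: "eventually (\<lambda>n. R / (real n + 1)^Suc 0 < e/2) sequentially"
    using e by (intro eventually_div_Suc_power_less) auto
  show "\<forall>\<^sub>F n in sequentially. \<forall>x\<in>K. dist (Fn1 n x / (x * Fn2 n x)) (a_fun \<sigma> f1 f2 x) < e"
    using eventually_delta_less[OF eta(1)] ev_R ev_bnd
  proof eventually_elim
    case (elim n)
    show ?case
    proof
      fix x assume xK: "x \<in> K"
      have x: "x > 0" "c \<le> x" "x \<le> R" using xK K c R by auto
      show "dist (Fn1 n x / (x * Fn2 n x)) (a_fun \<sigma> f1 f2 x) < e"
      proof (cases "x \<le> \<sigma> + \<eta>")
        case True
        have "x / (real n + 1) \<le> R / (real n + 1)" using x by (simp add: divide_right_mono)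
        moreover have "R / (real n + 1) < e/2" using elim(2) by simp
        ultimately have "x / (real n + 1) \<le> e/2" by linarith
        then have "\<bar>Fn1 n x / (x * Fn2 n x) - a_fun \<sigma> f1 f2 x\<bar> \<le> e/2"
          using Fn_a_near_sigma[OF x(1) True _ eta(2)] e by simp
        then show ?thesis using e by (simp add: dist_real_def)
      next
        case False
        then have "x \<in> K2" "\<sigma> + 2 * \<delta> n \<le> x" unfolding K2_def using xK elim(1) by auto
        then have "dist (Fn1 n x / (x * Fn2 n x)) (a_fun \<sigma> f1 f2 x) \<le> bnd n"
          using Fn_a_far[of n x c R m] x c m unfolding bnd_def dist_real_def by simp
        then show ?thesis using elim(3) by simp
      qed
    qed
  qed
qed

text \<open>Uniform convergence of b_n on compact subsets of (\<sigma>, \<infinity>): such a set eventually lies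
  beyond the transition region, where Fn2 n = f'' + kernel1.\<close>

lemma Fn_b_far:
  assumes x: "\<sigma> + 2 * \<delta> n \<le> x" "x \<le> R" and m: "m > 0" "m \<le> f2 x"
  shows "\<bar>x^2 / Fn2 n x - b_fun \<sigma> f2 x\<bar> \<le> R^2 * (3125 * R^3 / (real n + 1)^4) / m^2"
proof -
  have xs: "x > \<sigma>" using x delta_pos[of n] by linarith
  have "\<bar>x^2 / (f2 x + kernel1 (real n + 1) x) - x^2 / f2 x\<bar> \<le> R^2 * (3125 * R^3 / (real n + 1)^4) / m^2"
    by (rule square_quotient_perturbation_bound)
       (use x xs m sigma_pos kernel1_nonneg kernel_bounds_upto(2)[of "real n + 1" R x] in auto)
  moreover have "b_fun \<sigma> f2 x = x^2 / f2 x" using xs by (simp add: b_fun_def)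
  ultimately show ?thesis using Fn_above_cutoff[OF x(1)] by simp
qed

lemma Fn_b_uniform_limit:
  assumes K: "compact K" "K \<subseteq> {\<sigma><..}"
  shows "uniform_limit K (\<lambda>n s. s^2 / Fn2 n s) (b_fun \<sigma> f2) sequentially"
proof -
  obtain c where c: "c > \<sigma>" "\<And>x. x \<in> K \<Longrightarrow> c \<le> x" using compact_lower_bound[OF K] by blast
  obtain R where R: "R \<ge> 0" "\<And>x. x \<in> K \<Longrightarrow> x \<le> R" using compact_upper_bound[OF K(1)] by blast
  obtain m where m: "m > 0" "\<And>x. x \<in> K \<Longrightarrow> m \<le> f2 x"
    by (rule compact_positive_minimum[OF K(1) continuous_on_subset[OF f2_cont_on K(2)]])
       (use K f2_pos in auto)
  show ?thesis
  proof (rule uniform_limit_by_bound)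
    have "eventually (\<lambda>n. 2 * \<delta> n < c - \<sigma>) sequentially" using c(1) by (intro eventually_delta_less) simp
    then show "\<forall>\<^sub>F n in sequentially. \<forall>x\<in>K.
        \<bar>x^2 / Fn2 n x - b_fun \<sigma> f2 x\<bar> \<le> R^2 * (3125 * R^3 / (real n + 1)^4) / m^2"
      by eventually_elim (use Fn_b_far c R m in fastforce)
    have "(\<lambda>n. R^2 * 3125 * R^3 / m^2 / (real n + 1)^Suc 3) \<longlonglongrightarrow> 0" by (rule tendsto_div_Suc_power)
    then show "(\<lambda>n. R^2 * (3125 * R^3 / (real n + 1)^4) / m^2) \<longlonglongrightarrow> 0"
      by (simp add: field_simps eval_nat_numeral)
  qed
qed

text \<open>If f' is differentiable on (0, \<infinity>) with continuous derivative g, then g = 0 on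
  (0, \<sigma>] (f' is flat there, and g is continuous at \<sigma>) and g = f'' on (\<sigma>, \<infinity>).\<close>

lemma f1_derivative_below_sigma:
  assumes g: "\<forall>x>0. (f1 has_real_derivative g x) (at x)" "continuous_on {0<..} g"
    and s: "0 < s" "s \<le> \<sigma>"
  shows "g s = 0"
proof -
  have flat: "g t = 0" if "0 < t" "t < \<sigma>" for t
  proof -
    have "((\<lambda>_. 0::real) has_real_derivative 0) (at t)" by simp
    then have "(f1 has_real_derivative 0) (at t)"
      by (rule has_field_derivative_transform_within_open[where S="{0<..<\<sigma>}"])
         (use that f1_zero in auto)
    moreover have "(f1 has_real_derivative g t) (at t)" using g(1) that by simp
    ultimately show ?thesis using DERIV_unique by metis
  qed
  have "(g \<longlongrightarrow> g \<sigma>) (at_left \<sigma>)"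
    using g(2) sigma_pos by (simp add: continuous_on_eq_continuous_at isCont_def filterlim_at_split)
  moreover have "(g \<longlongrightarrow> 0) (at_left \<sigma>)"
    by (rule tendsto_eventually)
       (use eventually_at_left_real[OF sigma_pos] in \<open>eventually_elim, use flat in auto\<close>)
  ultimately have "g \<sigma> = 0" using tendsto_unique[OF trivial_limit_at_left_real] by blast
  then show ?thesis using flat s by (cases "s = \<sigma>") auto
qed

lemma f1_derivative_above_sigma:
  assumes "\<forall>x>0. (f1 has_real_derivative g x) (at x)" "s > \<sigma>"
  shows "g s = f2 s"
  using assms f1_deriv sigma_pos DERIV_unique by (metis less_trans)

text \<open>On the transition region the truncated derivative trunc2 = cutoff1 f' + cutoff f'' is
  close to g = f'' when g is small on (\<sigma>, x]: by the mean value theorem f'(x) is at most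
  2 delta_n times a value of g, which compensates the slope 2/delta_n of the cut-off.\<close>

lemma trunc2_transition_error:
  assumes g: "\<forall>x>0. (f1 has_real_derivative g x) (at x)"
    and x: "\<sigma> < x" "x < \<sigma> + 2 * \<delta> n"
    and small: "\<And>t. \<sigma> < t \<Longrightarrow> t \<le> x \<Longrightarrow> \<bar>g t\<bar> \<le> \<epsilon>"
  shows "\<bar>trunc2 (\<delta> n) x - g x\<bar> \<le> 5 * \<epsilon>"
proof -
  have gx: "g x = f2 x" using f1_derivative_above_sigma[OF g x(1)] .
  obtain z where z: "\<sigma> < z" "z < x" "f1 x - f1 \<sigma> = (x - \<sigma>) * g z"
    using MVT2[of \<sigma> x f1 g] x g sigma_pos by auto
  have f1x: "\<bar>f1 x\<bar> \<le> 2 * \<delta> n * \<epsilon>"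
  proof -
    have "\<bar>f1 x\<bar> = (x - \<sigma>) * \<bar>g z\<bar>" using z f1_zero[of \<sigma>] sigma_pos x by (simp add: abs_mult)
    also have "\<dots> \<le> 2 * \<delta> n * \<epsilon>" using x z small[of z] by (intro mult_mono) auto
    finally show ?thesis .
  qed
  have "\<bar>cutoff1 \<sigma> (\<delta> n) x * f1 x\<bar> \<le> (2 / \<delta> n) * (2 * \<delta> n * \<epsilon>)"
    unfolding abs_mult using cutoff1_range[OF delta_pos] f1x delta_pos[of n] by (intro mult_mono) auto
  also have "\<dots> = 4 * \<epsilon>" using delta_pos[of n] by (simp add: field_simps)
  finally have t1: "\<bar>cutoff1 \<sigma> (\<delta> n) x * f1 x\<bar> \<le> 4 * \<epsilon>" .
  have "\<bar>(cutoff \<sigma> (\<delta> n) x - 1) * f2 x\<bar> \<le> 1 * \<epsilon>"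
    unfolding abs_mult using cutoff_range[of \<sigma> "\<delta> n" x] small[of x] gx x by (intro mult_mono) auto
  moreover have "trunc2 (\<delta> n) x - g x = cutoff1 \<sigma> (\<delta> n) x * f1 x + (cutoff \<sigma> (\<delta> n) x - 1) * f2 x"
    unfolding trunc2_def gx by (simp add: algebra_simps)
  ultimately show ?thesis using t1 by linarith
qed

text \<open>Uniform convergence of Fn2: below \<sigma> both sides are (almost) 0, above the transition
  region Fn2 n - f'' is the small kernel term, and the transition region shrinks to \<sigma>
  where g is continuous with g(\<sigma>) = 0.\<close>

lemma Fn2_uniform_limit:
  assumes g: "\<forall>x>0. (f1 has_real_derivative g x) (at x)" "continuous_on {0<..} g"
    and K: "compact K" "K \<subseteq> {0<..}"
  shows "uniform_limit K Fn2 g sequentially"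
proof (rule uniform_limitI)
  fix e :: real assume e: "e > 0"
  obtain R where R: "R \<ge> 0" "\<And>x. x \<in> K \<Longrightarrow> x \<le> R" using compact_upper_bound[OF K(1)] by blast
  have "isCont g \<sigma>" using g(2) sigma_pos by (simp add: continuous_on_eq_continuous_at)
  then obtain \<rho> where rho: "\<rho> > 0" "\<And>t. dist t \<sigma> < \<rho> \<Longrightarrow> dist (g t) (g \<sigma>) < e/10"
    using e unfolding continuous_at_eps_delta by (metis divide_pos_pos zero_less_numeral)
  have g_small: "\<bar>g t\<bar> \<le> e/10" if "\<bar>t - \<sigma>\<bar> < \<rho>" for t
    using rho(2)[of t] that f1_derivative_below_sigma[OF g, of \<sigma>] sigma_pos
    by (simp add: dist_real_def)
  have ev_kernel: "eventually (\<lambda>n. 3125 * R^3 / (real n + 1)^Suc 3 < e/2) sequentially"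
    using e by (intro eventually_div_Suc_power_less) auto
  show "\<forall>\<^sub>F n in sequentially. \<forall>x\<in>K. dist (Fn2 n x) (g x) < e"
    using eventually_delta_less[OF rho(1)] ev_kernel
  proof eventually_elim
    case (elim n)
    show ?case
    proof
      fix x assume xK: "x \<in> K"
      have x: "x > 0" "x \<le> R" using xK K R by auto
      have ker: "0 \<le> kernel1 (real n + 1) x" "kernel1 (real n + 1) x < e/2"
        using kernel1_nonneg[of "real n + 1" x] kernel_bounds_upto(2)[of "real n + 1" R x] x elim(2)
        by (auto simp: eval_nat_numeral)
      consider "x \<le> \<sigma>" | "x \<ge> \<sigma> + 2 * \<delta> n" | "\<sigma> < x \<and> x < \<sigma> + 2 * \<delta> n" by linarith
      then show "dist (Fn2 n x) (g x) < e"
      proof cases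
        case 1
        then show ?thesis using Fn_below_sigma[OF 1, of n] f1_derivative_below_sigma[OF g x(1) 1] ker e
          by (simp add: dist_real_def)
      next
        case 2
        then have "g x = f2 x" using f1_derivative_above_sigma[OF g(1)] delta_pos[of n] by simp
        then show ?thesis using Fn_above_cutoff[OF 2] ker e by (simp add: dist_real_def)
      next
        case 3
        have "\<bar>trunc2 (\<delta> n) x - g x\<bar> \<le> 5 * (e/10)"
          by (rule trunc2_transition_error[OF g(1)]) (use 3 elim(1) g_small in auto)
        then show ?thesis using ker unfolding Fn2_def dist_real_def by linarith
      qed
    qed
  qed
qed

end

theorem theorem3p4:
  fixes f f1 f2 f3 :: "real \<Rightarrow> real" and \<sigma> :: real
  assumes sigma_pos: "\<sigma> > 0"
    and f_convex: "convex_on {0..} f"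
    and f_mono: "mono_on {0..} f"
    and f_deriv: "\<forall>x\<ge>0. (f has_real_derivative f1 x) (at x within {0..})"
    and f1_cont: "continuous_on {0..} f1"
    and f1_deriv: "\<forall>x>\<sigma>. (f1 has_real_derivative f2 x) (at x)"
    and f2_deriv: "\<forall>x>\<sigma>. (f2 has_real_derivative f3 x) (at x)"
    and f3_cont: "continuous_on {\<sigma><..} f3"
    and f_zero: "f 0 = 0"
    and f_superlin: "filterlim (\<lambda>s. f s / s) at_top at_top"
    and f1_flat: "\<forall>s. 0 \<le> s \<and> s \<le> \<sigma> \<longrightarrow> f1 s = 0"
    and f2_pos: "\<forall>s>\<sigma>. f2 s > 0"
    and a_mono: "\<exists>\<sigma>'>\<sigma>. mono_on {\<sigma>..\<sigma>'} (a_fun \<sigma> f1 f2)"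
  shows "\<exists>F F1 F2 F3 :: nat \<Rightarrow> real \<Rightarrow> real.
    (\<forall>n. convex_on {0..} (F n) \<and> F n 0 = 0 \<and> filterlim (\<lambda>s. F n s / s) at_top at_top
       \<comment> \<open>(i)\<close>
       \<and> (\<forall>x\<ge>0. (F n has_real_derivative F1 n x) (at x within {0..}))
       \<and> continuous_on {0..} (F1 n)
       \<and> (\<forall>x>0. (F1 n has_real_derivative F2 n x) (at x))
       \<and> (\<forall>x>0. (F2 n has_real_derivative F3 n x) (at x))
       \<and> continuous_on {0<..} (F3 n)
       \<comment> \<open>(iii), first part\<close>
       \<and> F1 n 0 = 0
       \<and> (\<forall>x\<ge>0. F1 (Suc n) x \<le> F1 n x)
       \<comment> \<open>(iv)\<close>
       \<and> (\<forall>x>0. F2 n x > 0)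
       \<comment> \<open>(v)\<close>
       \<and> ((\<lambda>s. (s * F2 n s - F1 n s) / s^3) \<longlongrightarrow> 0) (at_right 0)
       \<and> ((\<lambda>s. F1 n s / s) \<longlongrightarrow> 0) (at_right 0))
    \<comment> \<open>(ii) and (iii)\<close>
    \<and> (\<forall>K. compact K \<and> K \<subseteq> {0..} \<longrightarrow> uniform_limit K F f sequentially)
    \<and> (\<forall>K. compact K \<and> K \<subseteq> {0..} \<longrightarrow> uniform_limit K F1 f1 sequentially)
    \<comment> \<open>(vi)\<close>
    \<and> (\<forall>K. compact K \<and> K \<subseteq> {0..<\<sigma>} \<longrightarrow>
         uniform_limit K (\<lambda>n s. (s * F2 n s - F1 n s) / s^3) (\<lambda>s. 0) sequentially
       \<and> uniform_limit K (\<lambda>n s. F1 n s / s) (\<lambda>s. 0) sequentially)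
    \<comment> \<open>(vii)\<close>
    \<and> (\<forall>K. compact K \<and> K \<subseteq> {0<..} \<longrightarrow>
         uniform_limit K (\<lambda>n s. F1 n s / (s * F2 n s)) (a_fun \<sigma> f1 f2) sequentially)
    \<and> (\<forall>K. compact K \<and> K \<subseteq> {\<sigma><..} \<longrightarrow>
         uniform_limit K (\<lambda>n s. s^2 / F2 n s) (b_fun \<sigma> f2) sequentially)
    \<comment> \<open>(viii)\<close>
    \<and> (\<forall>g. (\<forall>x>0. (f1 has_real_derivative g x) (at x)) \<and> continuous_on {0<..} g \<longrightarrow>
         (\<forall>K. compact K \<and> K \<subseteq> {0<..} \<longrightarrow> uniform_limit K F2 g sequentially))"
proof -
  obtain \<sigma>' where am: "\<sigma>' > \<sigma>" "mono_on {\<sigma>..\<sigma>'} (a_fun \<sigma> f1 f2)" using a_mono by blast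
  obtain \<delta> :: "nat \<Rightarrow> real" where \<delta>: "\<And>n. 0 < \<delta> n" "\<And>n. \<delta> n \<le> 1 / (real n + 1)"
      "\<And>n. f1 (\<sigma> + 2 * \<delta> n) \<le> kernel_gap \<sigma> n"
    using admissible_widths_exist[of f1 \<sigma> "kernel_gap \<sigma>"] f1_cont f1_flat sigma_pos kernel_gap_pos
    by auto
  interpret approximation_data f f1 f2 f3 \<sigma> \<delta>
    by unfold_locales (use assms \<delta> in auto)
  show ?thesis
    by (intro exI[of _ Fn] exI[of _ Fn1] exI[of _ Fn2] exI[of _ Fn3] conjI allI impI)
       (auto intro: Fn_convex Fn_zero Fn_superlinear has_field_derivative_at_within[OF Fn_deriv]
         continuous_on_subset[OF Fn1_continuous] Fn1_deriv Fn2_deriv Fn3_continuous Fn1_nonpos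
         Fn1_decreasing Fn2_pos Fn_cubic_quotient_tendsto_0 Fn1_quotient_tendsto_0
         Fn_uniform_limit Fn1_uniform_limit Fn_cubic_quotient_uniform_limit
         Fn1_quotient_uniform_limit Fn_a_uniform_limit[OF am] Fn_b_uniform_limit Fn2_uniform_limit)
qed

end
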